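(* Fix $n\in\mathbb Z_{\ge2}$ and $k\in\mathbb Z_{\ge1}$. There exists a constant $C=C(k,n)$ such that for every walk $w=(e_1,\dots,e_j)$, $j\ge1$, in the coloured overlap graph $\mathcal{O}v_c(k,\searrow_n)$, there exist a (possibly empty) walk $w'$ in $\mathcal{O}v_c(k,\searrow_n)$ with $|w'|\le C$ and a permutation $\sigma\in\mathrm{Av}(\searrow_n)$ of size $j+k-1+|w'|$ such that $W^c_k(\sigma)=w'\bullet w$.
   Context: $\searrow_n=n(n-1)\cdots1$. For $I=\{i_1<\dots<i_j\}$, $\mathrm{pat}_I(\sigma)$ is the unique permutation with entries in the same relative order as $\sigma(i_1),\dots,\sigma(i_j)$; $\mathrm{Av}_m(\searrow_n)$ is the set of size-$m$ permutations $\sigma$ with no $I$ such that $\mathrm{pat}_I(\sigma)=\searrow_n$ ($\mathrm{Av}_0$ is the empty permutation), $\mathrm{Av}(\searrow_n)$ their union over $m\ge1$. A colouring of $\sigma\in\mathcal S_m$ is a map $\mathfrak c:[m]\to\mathbb Z_{\ge1}$; restriction $\mathrm{pat}_I(\sigma,\mathfrak c)=(\mathrm{pat}_I(\sigma),\mathfrak c')$ with $\mathfrak c'(\ell)=\mathfrak c(i_\ell)$; $\mathrm{be}_j=\mathrm{pat}_{\{1,\dots,j\}}$, $\mathrm{en}_j=\mathrm{pat}_{\{m-j+1,\dots,m\}}$. The RITMO colouring $\mathbb C(\sigma)$ processes indices in decreasing order of value, giving index $i$ the smallest positive integer $c$ such that no already coloured index $j<i$ has colour $c$ (equivalently: colour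 1 on left-to-right maxima, colour 2 on left-to-right maxima of the remaining entries, etc.); $\mathbb S(\sigma)=(\sigma,\mathbb C(\sigma))$. A coloured permutation $(\pi,\mathfrak c)$ with $\pi\in\mathrm{Av}_k(\searrow_n)$ is inherited if there is $\sigma\in\mathrm{Av}(\searrow_n)$ with $|\sigma|\ge k$ and $\mathrm{en}_k(\mathbb S(\sigma))=(\pi,\mathfrak c)$; $\mathcal C_{n-1}(k)$ is the set of these. The coloured overlap graph $\mathcal{O}v_c(k,\searrow_n)$ has vertex set $\mathcal C_{n-1}(k-1)$, edge set $\mathcal C_{n-1}(k)$, the edge $(\pi,\mathfrak c)$ going from $\mathrm{be}_{k-1}(\pi,\mathfrak c)$ to $\mathrm{en}_{k-1}(\pi,\mathfrak c)$. A walk is a sequence of edges with each arrival vertex equal to the next start vertex; $|w|$ is its number of edges; $w'\bullet w$ is concatenation (defined when the last edge of $w'$ ends where the first edge of $w$ starts, or $w'$ empty). For $\sigma\in\mathrm{Av}_m(\searrow_n)$, $m\ge k$, the coloured walk is $W^c_k(\sigma)=(\mathrm{pat}_{\{1,\dots,k\}}(\mathbb S(\sigma)),\dots,\mathrm{pat}_{\{m-k+1,\dots,m\}}(\mathbb S(\sigma)))$, a walk of size $m-k+1$ in $\mathcal{O}v_c(k,\searrow_n)$. *)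

theory Defs
  imports Main
begin

text \<open>Permutations of size m are lists whose entries are exactly 1..m (positions are 0-based).
A coloured permutation is a pair (permutation, list of colours) of equal length.\<close>

definition is_perm :: "nat list \<Rightarrow> bool" where
  "is_perm \<sigma> \<longleftrightarrow> distinct \<sigma> \<and> set \<sigma> = {1..length \<sigma>}"

definition std :: "nat list \<Rightarrow> nat list" where
  "std xs = map (\<lambda>x. card {y \<in> set xs. y \<le> x}) xs"

definition pat :: "nat set \<Rightarrow> nat list \<Rightarrow> nat list" where
  "pat I \<sigma> = std (nths \<sigma> I)"

definition decr :: "nat \<Rightarrow> nat list" where
  "decr n = rev [1..<n+1]"

definition avoids :: "nat list \<Rightarrow> nat list \<Rightarrow> bool" where
  "avoids \<sigma> \<tau> \<longleftrightarrow> \<not> (\<exists>I \<subseteq> {0..<length \<sigma>}. pat I \<sigma> = \<tau>)"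

definition Av_m :: "nat \<Rightarrow> nat list \<Rightarrow> nat list set" where
  "Av_m m \<tau> = {\<sigma>. is_perm \<sigma> \<and> length \<sigma> = m \<and> avoids \<sigma> \<tau>}"

definition Av :: "nat list \<Rightarrow> nat list set" where
  "Av \<tau> = (\<Union>m\<in>{1..}. Av_m m \<tau>)"

type_synonym cperm = "nat list \<times> nat list"

definition cpat :: "nat set \<Rightarrow> cperm \<Rightarrow> cperm" where
  "cpat I sc = (pat I (fst sc), nths (snd sc) I)"

definition be :: "nat \<Rightarrow> cperm \<Rightarrow> cperm" where
  "be j sc = cpat {0..<j} sc"

definition en :: "nat \<Rightarrow> cperm \<Rightarrow> cperm" where
  "en j sc = cpat {length (fst sc) - j..<length (fst sc)} sc"

text \<open>RITMO colouring: indices processed in decreasing order of value; index i receives the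
smallest positive colour c not carried by an already coloured index j < i
(0 marks a not yet coloured index).\<close>
definition ritmo :: "nat list \<Rightarrow> nat list" where
  "ritmo \<sigma> = fold (\<lambda>i c. c[i := (LEAST c'. 1 \<le> c' \<and> (\<forall>j<i. c ! j \<noteq> c'))])
      (rev (sort_key (\<lambda>i. \<sigma> ! i) [0..<length \<sigma>])) (replicate (length \<sigma>) 0)"

definition S :: "nat list \<Rightarrow> cperm" where
  "S \<sigma> = (\<sigma>, ritmo \<sigma>)"

definition inherited :: "nat \<Rightarrow> nat \<Rightarrow> cperm set" where
  "inherited n k = {pc. fst pc \<in> Av_m k (decr n) \<and>
      (\<exists>\<sigma> \<in> Av (decr n). length \<sigma> \<ge> k \<and> en k (S \<sigma>) = pc)}"

definition ov_vertices :: "nat \<Rightarrow> nat \<Rightarrow> cperm set" where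
  "ov_vertices k n = inherited n (k - 1)"

definition ov_edges :: "nat \<Rightarrow> nat \<Rightarrow> cperm set" where
  "ov_edges k n = inherited n k"

definition src :: "nat \<Rightarrow> cperm \<Rightarrow> cperm" where
  "src k e = be (k - 1) e"

definition tgt :: "nat \<Rightarrow> cperm \<Rightarrow> cperm" where
  "tgt k e = en (k - 1) e"

definition is_walk :: "nat \<Rightarrow> nat \<Rightarrow> cperm list \<Rightarrow> bool" where
  "is_walk k n w \<longleftrightarrow> set w \<subseteq> ov_edges k n \<and>
     (\<forall>i. Suc i < length w \<longrightarrow> tgt k (w ! i) = src k (w ! Suc i))"

definition concat_defined :: "nat \<Rightarrow> cperm list \<Rightarrow> cperm list \<Rightarrow> bool" where
  "concat_defined k w' w \<longleftrightarrow> w' = [] \<or> (w \<noteq> [] \<and> tgt k (last w') = src k (hd w))"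

definition coloured_walk :: "nat \<Rightarrow> nat list \<Rightarrow> cperm list" where
  "coloured_walk k \<sigma> = map (\<lambda>i. cpat {i..<i+k} (S \<sigma>)) [0..<length \<sigma> - k + 1]"

end

theory Submission
  imports Defs
begin

text \<open>The RITMO colour of an entry is the length of a longest decreasing subsequence ending at it,
so a permutation avoids n(n-1)...1 exactly when all its colours are below n. A walk is realised
edge by edge: if \<sigma> realises a walk and the edge (pi, c) continues it, append a new last entry,
its value chosen inside the gap prescribed by pi and such that the larger entries to its left
carry exactly the colours below the last colour of c. Such a value exists as long as every colour
1, ..., n - 2 occurs in \<sigma>. To start, the first edge is realised by a witness of bounded length
(there are finitely many edges), preceded by the decreasing sequence n - 2, ..., 1, which supplies
all these colours; the walk w' is formed by the earlier edges of this starting permutation.\<close>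

section \<open>Standardisation\<close>

lemma length_std [simp]: "length (std xs) = length xs"
  by (simp add: std_def)

lemma nth_std:
  assumes "distinct xs" "p < length xs"
  shows "std xs ! p = card {q. q < length xs \<and> xs ! q \<le> xs ! p}"
proof -
  have "{y \<in> set xs. y \<le> xs ! p} = (!) xs ` {q. q < length xs \<and> xs ! q \<le> xs ! p}"
    by (auto simp: in_set_conv_nth)
  moreover have "inj_on ((!) xs) {q. q < length xs \<and> xs ! q \<le> xs ! p}"
    using assms(1) by (simp add: inj_on_def nth_eq_iff_index_eq)
  ultimately show ?thesis using assms by (simp add: std_def card_image)
qed

lemma std_less_iff:
  assumes "distinct xs" "p < length xs" "q < length xs"
  shows "std xs ! p < std xs ! q \<longleftrightarrow> xs ! p < xs ! q"
proof -
  let ?below = "\<lambda>p. {r. r < length xs \<and> xs ! r \<le> xs ! p}"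
  have mono: "card (?below p) < card (?below q)" if "xs ! p < xs ! q" "q < length xs" for p q
  proof (rule psubset_card_mono)
    have "?below p \<subseteq> ?below q" "q \<in> ?below q - ?below p" using that by auto
    then show "?below p \<subset> ?below q" by blast
  qed simp
  show ?thesis
  proof
    assume "std xs ! p < std xs ! q"
    then have "\<not> xs ! q < xs ! p"
      using mono[of q p] assms by (auto simp: nth_std)
    moreover have "xs ! p \<noteq> xs ! q"
      using \<open>std xs ! p < std xs ! q\<close> assms by (auto simp: nth_eq_iff_index_eq)
    ultimately show "xs ! p < xs ! q" by simp
  qed (use mono[of p q] assms in \<open>simp add: nth_std\<close>)
qed

lemma distinct_std:
  assumes "distinct xs"
  shows "distinct (std xs)"
  unfolding distinct_conv_nth
proof (intro allI impI)
  fix i j assume ij: "i < length (std xs)" "j < length (std xs)" "i \<noteq> j"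
  then have "xs ! i \<noteq> xs ! j"
    using assms by (simp add: nth_eq_iff_index_eq)
  then have "xs ! i < xs ! j \<or> xs ! j < xs ! i" by (rule neqE) simp_all
  then show "std xs ! i \<noteq> std xs ! j"
    using std_less_iff[OF assms, of i j] std_less_iff[OF assms, of j i] ij by auto
qed

lemma std_eq_if_order_iso:
  assumes "distinct xs" "distinct ys" "length xs = length ys"
    and "\<And>p q. p < length xs \<Longrightarrow> q < length xs \<Longrightarrow> xs ! p < xs ! q \<longleftrightarrow> ys ! p < ys ! q"
  shows "std xs = std ys"
proof (rule nth_equalityI)
  fix p assume "p < length (std xs)"
  then have p: "p < length xs" by simp
  have "xs ! q \<le> xs ! p \<longleftrightarrow> ys ! q \<le> ys ! p" if q: "q < length xs" for q
    using assms(4)[OF q p] assms(4)[OF p q] by (simp add: not_less[symmetric])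
  then have "{q. q < length xs \<and> xs ! q \<le> xs ! p} = {q. q < length ys \<and> ys ! q \<le> ys ! p}"
    using assms(3) by auto
  then show "std xs ! p = std ys ! p" using assms p by (simp add: nth_std)
qed (use assms in simp)

lemma std_map_strict_mono:
  assumes "strict_mono f" "distinct xs"
  shows "std (map f xs) = std xs"
  using assms by (intro std_eq_if_order_iso)
    (simp_all add: distinct_map strict_mono_less strict_mono_imp_inj_on)

lemma std_take_drop_std:
  assumes "distinct xs"
  shows "std (take j (drop i (std xs))) = std (take j (drop i xs))"
proof (rule std_eq_if_order_iso)
  fix p q assume "p < length (take j (drop i (std xs)))" "q < length (take j (drop i (std xs)))"
  then have "i + p < length xs" "i + q < length xs" "p < j" "q < j" by auto
  then show "take j (drop i (std xs)) ! p < take j (drop i (std xs)) ! q \<longleftrightarrow>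
      take j (drop i xs) ! p < take j (drop i xs) ! q"
    using assms by (simp add: std_less_iff)
qed (use assms distinct_std in simp_all)

lemma is_perm_distinct: "is_perm s \<Longrightarrow> distinct s"
  by (simp add: is_perm_def)

lemma is_perm_nth_bounds:
  assumes "is_perm s" "j < length s"
  shows "1 \<le> s ! j \<and> s ! j \<le> length s"
proof -
  have "s ! j \<in> {1..length s}" using assms unfolding is_perm_def by (metis nth_mem)
  then show ?thesis by simp
qed

lemma is_perm_if_distinct_subset:
  assumes "distinct s" "set s \<subseteq> {1..length s}"
  shows "is_perm s"
  using assms by (simp add: is_perm_def distinct_card card_subset_eq)

lemma is_perm_std:
  assumes "distinct xs"
  shows "is_perm (std xs)"
proof -
  have "set (std xs) \<subseteq> {1..length xs}"
  proof
    fix y assume "y \<in> set (std xs)"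
    then obtain p where p: "p < length xs" "y = std xs ! p" by (auto simp: in_set_conv_nth)
    have "card {q. q < length xs \<and> xs ! q \<le> xs ! p} \<le> card {..<length xs}"
      by (rule card_mono) auto
    moreover have "p \<in> {q. q < length xs \<and> xs ! q \<le> xs ! p}" using p by simp
    then have "card {q. q < length xs \<and> xs ! q \<le> xs ! p} > 0" by (auto simp: card_gt_0_iff)
    ultimately show "y \<in> {1..length xs}" using p assms by (simp add: nth_std)
  qed
  then show ?thesis using is_perm_if_distinct_subset[OF distinct_std[OF assms]] by simp
qed

lemma std_is_perm:
  assumes "is_perm p"
  shows "std p = p"
proof -
  have "card {y \<in> set p. y \<le> x} = x" if "x \<in> set p" for x
  proof -
    have "{y \<in> set p. y \<le> x} = {1..x}" using assms that by (auto simp: is_perm_def)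
    then show ?thesis by simp
  qed
  then show ?thesis by (simp add: std_def map_idI)
qed

lemma nths_atLeastLessThan: "nths xs {i..<i + k} = take k (drop i xs)"
proof -
  have "x \<in> (+) i ` {..<k}" if "x \<in> {i..<i + k}" for x
    using that by (intro image_eqI[of _ _ "x - i"]) auto
  then have "{i..<i + k} = (+) i ` {..<k}" by auto
  then show ?thesis by (metis nths_drop nths_upt_eq_take)
qed

lemma nths_conv_filter: "nths xs I = map ((!) xs) (filter (\<lambda>i. i \<in> I) [0..<length xs])"
proof -
  have "zip xs [0..<length xs] = map (\<lambda>i. (xs ! i, i)) [0..<length xs]"
    by (rule nth_equalityI) simp_all
  then show ?thesis unfolding nths_def by (simp add: filter_map comp_def)
qed

lemma length_decr [simp]: "length (decr n) = n"
  by (simp add: decr_def)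

lemma nth_decr: "p < n \<Longrightarrow> decr n ! p = n - p"
  by (simp add: decr_def rev_nth del: upt_Suc)

lemma std_sorted_decreasing:
  assumes "sorted_wrt (>) ys"
  shows "std ys = decr (length ys)"
proof (rule nth_equalityI)
  fix p assume "p < length (std ys)"
  then have p: "p < length ys" by simp
  have "sorted_wrt (<) (rev ys)" using assms by (simp add: sorted_wrt_rev)
  then have "distinct ys" by (simp add: strict_sorted_iff)
  have "ys ! q \<le> ys ! p \<longleftrightarrow> p \<le> q" if q: "q < length ys" for q
  proof (cases p q rule: linorder_cases)
    case less
    then show ?thesis using sorted_wrt_nth_less[OF assms less q] by simp
  next
    case greater
    then show ?thesis using sorted_wrt_nth_less[OF assms greater p] by simp
  qed simp
  then have "{q. q < length ys \<and> ys ! q \<le> ys ! p} = {p..<length ys}" by auto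
  then show "std ys ! p = decr (length ys) ! p"
    using nth_std[OF \<open>distinct ys\<close> p] nth_decr[OF p] by simp
qed simp

section \<open>The RITMO colouring\<close>

text \<open>A static description of the greedy RITMO colouring: the colours of the larger entries to the
left of i form exactly the initial segment below the colour of i. Hence d ! i is the length of a
longest decreasing subsequence ending at i.\<close>

definition ritmo_colouring :: "nat list \<Rightarrow> nat list \<Rightarrow> bool" where
  "ritmo_colouring s d \<longleftrightarrow> length d = length s \<and>
     (\<forall>i<length s. 1 \<le> d ! i \<and> (!) d ` {j. j < i \<and> s ! i < s ! j} = {1..<d ! i})"

lemma ritmo_colouring_length: "ritmo_colouring s d \<Longrightarrow> length d = length s"
  by (simp add: ritmo_colouring_def)

lemma ritmo_colouring_pos: "ritmo_colouring s d \<Longrightarrow> i < length s \<Longrightarrow> 1 \<le> d ! i"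
  by (simp add: ritmo_colouring_def)

lemma ritmo_colouring_image:
  "ritmo_colouring s d \<Longrightarrow> i < length s \<Longrightarrow> (!) d ` {j. j < i \<and> s ! i < s ! j} = {1..<d ! i}"
  by (simp add: ritmo_colouring_def)

lemma ritmo_colouring_less:
  assumes "ritmo_colouring s d" "j < i" "i < length s" "s ! i < s ! j"
  shows "d ! j < d ! i"
proof -
  have "d ! j \<in> (!) d ` {j. j < i \<and> s ! i < s ! j}" using assms(2,4) by blast
  then show ?thesis using ritmo_colouring_image[OF assms(1,3)] by simp
qed

lemma ritmo_colouring_witness:
  assumes "ritmo_colouring s d" "i < length s" "1 \<le> c" "c < d ! i"
  shows "\<exists>j<i. s ! i < s ! j \<and> d ! j = c"
proof -
  have "c \<in> (!) d ` {j. j < i \<and> s ! i < s ! j}"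
    using ritmo_colouring_image[OF assms(1,2)] assms(3,4) by simp
  then show ?thesis by force
qed

lemma ritmo_colouring_unique:
  assumes d1: "ritmo_colouring s d1" and d2: "ritmo_colouring s d2"
  shows "d1 = d2"
proof (rule nth_equalityI)
  show "length d1 = length d2" using d1 d2 by (simp add: ritmo_colouring_length)
  have "d1 ! i = d2 ! i" if "i < length s" for i
    using that
  proof (induction i rule: less_induct)
    case (less i)
    have "d1 ! j = d2 ! j" if "j < i" for j
      using less.IH[OF that] that less.prems by simp
    then have "(!) d1 ` {j. j < i \<and> s ! i < s ! j} = (!) d2 ` {j. j < i \<and> s ! i < s ! j}"
      by (intro image_cong) simp_all
    then have eq: "{1..<d1 ! i} = {1..<d2 ! i}"
      using ritmo_colouring_image[OF d1 less.prems] ritmo_colouring_image[OF d2 less.prems] by simp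
    have "1 \<le> d1 ! i" "1 \<le> d2 ! i"
      using ritmo_colouring_pos[OF d1 less.prems] ritmo_colouring_pos[OF d2 less.prems] by simp_all
    then have "\<not> d1 ! i < d2 ! i" "\<not> d2 ! i < d1 ! i"
      using eq by (metis atLeastLessThan_iff less_irrefl)+
    then show ?case by simp
  qed
  moreover have "length d1 = length s" using d1 by (simp add: ritmo_colouring_length)
  ultimately show "d1 ! i = d2 ! i" if "i < length d1" for i
    using that by simp
qed

lemma Least_positive_notin_downclosed:
  fixes E :: "nat set"
  assumes "finite E" "\<And>x. x \<in> E \<Longrightarrow> 1 \<le> x" "\<And>x y. x \<in> E \<Longrightarrow> 1 \<le> y \<Longrightarrow> y < x \<Longrightarrow> y \<in> E"
  shows "1 \<le> (LEAST c. 1 \<le> c \<and> c \<notin> E)" and "E = {1..<(LEAST c. 1 \<le> c \<and> c \<notin> E)}"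
proof -
  define v where "v = (LEAST c. 1 \<le> c \<and> c \<notin> E)"
  have "x \<le> Max (insert 0 E)" if "x \<in> E" for x
    using assms(1) that by simp
  then have "Suc (Max (insert 0 E)) \<notin> E" by (meson Suc_n_not_le_n)
  then have "1 \<le> Suc (Max (insert 0 E)) \<and> Suc (Max (insert 0 E)) \<notin> E"
    by (simp only: One_nat_def Suc_le_mono le0 simp_thms)
  then have v: "1 \<le> v \<and> v \<notin> E"
    unfolding v_def by (rule LeastI)
  have below: "y \<in> E" if "1 \<le> y" "y < v" for y
    using that not_less_Least[of y "\<lambda>c. 1 \<le> c \<and> c \<notin> E"] unfolding v_def by blast
  have above: "x < v" if x: "x \<in> E" for x
  proof (rule ccontr)
    assume "\<not> x < v"
    then have "v = x \<or> v < x" by linarith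
    then have "v \<in> E" using x assms(3)[OF x, of v] v by blast
    then show False using v by simp
  qed
  show "1 \<le> v" using v by simp
  show "E = {1..<v}"
  proof (intro equalityI subsetI)
    fix x assume "x \<in> E" then show "x \<in> {1..<v}" using assms(2) above by simp
  next
    fix x assume "x \<in> {1..<v}" then show "x \<in> E" using below by simp
  qed
qed

text \<open>Invariant of the fold defining ritmo, once the indices in D have been coloured
(0 marks an uncoloured index).\<close>

definition ritmo_partial :: "nat list \<Rightarrow> nat set \<Rightarrow> nat list \<Rightarrow> bool" where
  "ritmo_partial s D c \<longleftrightarrow> length c = length s \<and> D \<subseteq> {..<length s} \<and>
     (\<forall>i<length s. i \<notin> D \<longrightarrow> c ! i = 0) \<and>
     (\<forall>i\<in>D. 1 \<le> c ! i \<and> (!) c ` {j. j < i \<and> s ! i < s ! j} = {1..<c ! i}) \<and>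
     (\<forall>i\<in>D. \<forall>j<length s. s ! i < s ! j \<longrightarrow> j \<in> D)"

definition ritmo_step :: "nat \<Rightarrow> nat list \<Rightarrow> nat list" where
  "ritmo_step i c = c[i := (LEAST c'. 1 \<le> c' \<and> (\<forall>j<i. c ! j \<noteq> c'))]"

lemma ritmo_partial_mem_iff:
  assumes ds: "distinct s" and inv: "ritmo_partial s D c" and i: "i < length s" "i \<notin> D"
    and larger: "\<And>j. j < length s \<Longrightarrow> s ! i < s ! j \<Longrightarrow> j \<in> D"
  shows "j \<in> D \<longleftrightarrow> j < length s \<and> s ! i < s ! j"
proof
  assume jD: "j \<in> D"
  then have "j < length s" "j \<noteq> i" using inv i by (auto simp: ritmo_partial_def)
  then have "s ! j \<noteq> s ! i" using ds i by (simp add: nth_eq_iff_index_eq)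
  moreover have "\<not> s ! j < s ! i" using inv jD i by (auto simp: ritmo_partial_def)
  ultimately show "j < length s \<and> s ! i < s ! j" using \<open>j < length s\<close> by simp
qed (use larger in blast)

text \<open>When i is coloured, the colours of the larger entries to its left form an initial segment,
so the least fresh colour lies just above them.\<close>

lemma ritmo_step_eq:
  assumes ds: "distinct s" and inv: "ritmo_partial s D c" and i: "i < length s" "i \<notin> D"
    and larger: "\<And>j. j < length s \<Longrightarrow> s ! i < s ! j \<Longrightarrow> j \<in> D"
  obtains v where "1 \<le> v" "ritmo_step i c = c[i := v]" "(!) c ` {j. j < i \<and> s ! i < s ! j} = {1..<v}"
proof -
  have zero: "\<And>i. i < length s \<Longrightarrow> i \<notin> D \<Longrightarrow> c ! i = 0"
    and col: "\<And>i. i \<in> D \<Longrightarrow> 1 \<le> c ! i \<and> (!) c ` {j. j < i \<and> s ! i < s ! j} = {1..<c ! i}"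
    using inv unfolding ritmo_partial_def by blast+
  note D_eq = ritmo_partial_mem_iff[OF ds inv i larger]
  define E where "E = (!) c ` {j. j < i \<and> s ! i < s ! j}"
  have E_pos: "1 \<le> x" if "x \<in> E" for x
    using that col D_eq i(1) unfolding E_def by auto
  have E_down: "y \<in> E" if x: "x \<in> E" and y: "1 \<le> y" "y < x" for x y
  proof -
    obtain j where j: "x = c ! j" "j < i" "s ! i < s ! j" using x unfolding E_def by blast
    then have "j \<in> D" using D_eq i by simp
    then have "y \<in> (!) c ` {j'. j' < j \<and> s ! j < s ! j'}" using col[of j] j y by simp
    then obtain j' where "y = c ! j'" "j' < j" "s ! j < s ! j'" by blast
    then show "y \<in> E" using j unfolding E_def by fastforce
  qed
  have fresh_iff: "(\<forall>j<i. c ! j \<noteq> c') \<longleftrightarrow> c' \<notin> E" if "1 \<le> c'" for c'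
  proof -
    have "c ! j \<noteq> c'" if "j < i" "\<not> s ! i < s ! j" for j
      using zero[of j] D_eq[of j] that \<open>1 \<le> c'\<close> i(1) by simp
    then show ?thesis unfolding E_def by auto
  qed
  define v where "v = (LEAST c'. 1 \<le> c' \<and> (\<forall>j<i. c ! j \<noteq> c'))"
  have v_eq: "v = (LEAST c'. 1 \<le> c' \<and> c' \<notin> E)"
    unfolding v_def by (intro arg_cong[where f = Least] ext) (meson fresh_iff)
  have "finite E" unfolding E_def by simp
  then have "1 \<le> v" "E = {1..<v}"
    unfolding v_eq using Least_positive_notin_downclosed E_pos E_down by blast+
  moreover have "ritmo_step i c = c[i := v]" unfolding ritmo_step_def v_def ..
  ultimately show ?thesis using that unfolding E_def by blast
qed

lemma ritmo_partial_step:
  assumes ds: "distinct s" and inv: "ritmo_partial s D c" and i: "i < length s" "i \<notin> D"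
    and larger: "\<And>j. j < length s \<Longrightarrow> s ! i < s ! j \<Longrightarrow> j \<in> D"
  shows "ritmo_partial s (insert i D) (ritmo_step i c)"
proof -
  have lc: "length c = length s" and Dsub: "D \<subseteq> {..<length s}"
    and zero: "\<And>i. i < length s \<Longrightarrow> i \<notin> D \<Longrightarrow> c ! i = 0"
    and col: "\<And>i. i \<in> D \<Longrightarrow> 1 \<le> c ! i \<and> (!) c ` {j. j < i \<and> s ! i < s ! j} = {1..<c ! i}"
    and closed: "\<And>i j. i \<in> D \<Longrightarrow> j < length s \<Longrightarrow> s ! i < s ! j \<Longrightarrow> j \<in> D"
    using inv unfolding ritmo_partial_def by blast+
  obtain v where v_pos: "1 \<le> v" and step: "ritmo_step i c = c[i := v]"
    and colour_i: "(!) c ` {j. j < i \<and> s ! i < s ! j} = {1..<v}"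
    using ritmo_step_eq[OF ds inv i larger] .
  have colour_i': "(!) (c[i := v]) ` {j. j < i \<and> s ! i < s ! j} = {1..<v}"
    unfolding colour_i[symmetric] by (intro image_cong) auto
  have colour_D: "(!) (c[i := v]) ` {j. j < i' \<and> s ! i' < s ! j} = (!) c ` {j. j < i' \<and> s ! i' < s ! j}"
    if "i' \<in> D" for i'
  proof (intro image_cong refl)
    fix j assume "j \<in> {j. j < i' \<and> s ! i' < s ! j}"
    then have "j \<noteq> i" using ritmo_partial_mem_iff[OF ds inv i larger, of i'] that by auto
    then show "c[i := v] ! j = c ! j" by simp
  qed
  show ?thesis
    unfolding ritmo_partial_def step
  proof (intro conjI ballI allI impI)
    fix i' assume i': "i' \<in> insert i D"
    have "1 \<le> c[i := v] ! i' \<and>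
        (!) (c[i := v]) ` {j. j < i' \<and> s ! i' < s ! j} = {1..<c[i := v] ! i'}"
    proof (cases "i' = i")
      case True
      then show ?thesis using colour_i' v_pos lc i(1) by simp
    next
      case False
      then show ?thesis using i' col[of i'] colour_D[of i'] by simp
    qed
    then show "1 \<le> c[i := v] ! i'"
      and "(!) (c[i := v]) ` {j. j < i' \<and> s ! i' < s ! j} = {1..<c[i := v] ! i'}"
      by simp_all
  next
    fix i' j assume "i' \<in> insert i D" "j < length s" "s ! i' < s ! j"
    then show "j \<in> insert i D" using closed[of i' j] larger[of j] by blast
  qed (use lc Dsub zero i in simp_all)
qed

lemma ritmo_partial_fold:
  assumes "distinct s"
  shows "ritmo_partial s D c \<Longrightarrow> distinct xs \<Longrightarrow> set xs \<inter> D = {} \<Longrightarrow> set xs \<subseteq> {..<length s} \<Longrightarrow>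
    (\<forall>p<length xs. \<forall>j<length s. s ! (xs ! p) < s ! j \<longrightarrow> j \<in> D \<union> set (take p xs)) \<Longrightarrow>
    ritmo_partial s (D \<union> set xs) (fold ritmo_step xs c)"
proof (induction xs arbitrary: D c)
  case (Cons i xs)
  have i: "i < length s" "i \<notin> D" using Cons.prems by auto
  have "j \<in> D" if "j < length s" "s ! i < s ! j" for j
    using Cons.prems(5) that by fastforce
  then have "ritmo_partial s (insert i D) (ritmo_step i c)"
    using ritmo_partial_step[OF assms Cons.prems(1) i] by blast
  moreover have "\<forall>p<length xs. \<forall>j<length s. s ! (xs ! p) < s ! j \<longrightarrow> j \<in> insert i D \<union> set (take p xs)"
  proof (intro allI impI)
    fix p j assume "p < length xs" "j < length s" "s ! (xs ! p) < s ! j"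
    then have "j \<in> D \<union> set (take (Suc p) (i # xs))" using Cons.prems(5) by fastforce
    then show "j \<in> insert i D \<union> set (take p xs)" by simp
  qed
  ultimately have "ritmo_partial s (insert i D \<union> set xs) (fold ritmo_step xs (ritmo_step i c))"
    using Cons.prems(2-4) by (intro Cons.IH) auto
  then show ?case by simp
qed simp

lemma ritmo_colouring_ritmo:
  assumes ds: "distinct s"
  shows "ritmo_colouring s (ritmo s)"
proof -
  define K where "K = sort_key (\<lambda>i. s ! i) [0..<length s]"
  define L where "L = rev K"
  have setL: "set L = {..<length s}" and dL: "distinct L" and lL: "length L = length s"
    unfolding L_def K_def by auto
  have dec: "s ! (L ! q) \<le> s ! (L ! p)" if "p \<le> q" "q < length L" for p q
  proof -
    have "sorted (map (\<lambda>i. s ! i) K)" unfolding K_def by simp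
    then have "s ! (K ! (length K - Suc q)) \<le> s ! (K ! (length K - Suc p))"
      using sorted_nth_mono[of "map (\<lambda>i. s ! i) K"] that unfolding L_def by simp
    then show ?thesis using that unfolding L_def by (simp add: rev_nth)
  qed
  have "\<forall>p<length L. \<forall>j<length s. s ! (L ! p) < s ! j \<longrightarrow> j \<in> {} \<union> set (take p L)"
  proof (intro allI impI)
    fix p j assume p: "p < length L" and j: "j < length s" "s ! (L ! p) < s ! j"
    obtain q where q: "q < length L" "L ! q = j" using setL j by (metis in_set_conv_nth lessThan_iff)
    have "q < p" using dec[of p q] q j by (meson leI not_le)
    then show "j \<in> {} \<union> set (take p L)" using q p by (auto simp: in_set_conv_nth)
  qed
  moreover have "ritmo_partial s {} (replicate (length s) 0)" by (simp add: ritmo_partial_def)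
  ultimately have "ritmo_partial s ({} \<union> set L) (fold ritmo_step L (replicate (length s) 0))"
    using setL dL by (intro ritmo_partial_fold[OF ds]) auto
  moreover have "ritmo s = fold ritmo_step L (replicate (length s) 0)"
    unfolding ritmo_def L_def K_def ritmo_step_def ..
  ultimately show ?thesis using setL unfolding ritmo_partial_def ritmo_colouring_def by auto
qed

lemma ritmo_eqI: "distinct s \<Longrightarrow> ritmo_colouring s d \<Longrightarrow> ritmo s = d"
  using ritmo_colouring_ritmo ritmo_colouring_unique by blast

lemma length_ritmo [simp]: "distinct s \<Longrightarrow> length (ritmo s) = length s"
  using ritmo_colouring_ritmo ritmo_colouring_length by blast

lemma ritmo_colouring_order_iso:
  assumes "length xs = length ys"
    and "\<And>p q. p < length xs \<Longrightarrow> q < length xs \<Longrightarrow> xs ! p < xs ! q \<longleftrightarrow> ys ! p < ys ! q"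
  shows "ritmo_colouring xs d \<longleftrightarrow> ritmo_colouring ys d"
proof -
  have "{j. j < i \<and> xs ! i < xs ! j} = {j. j < i \<and> ys ! i < ys ! j}" if "i < length xs" for i
    using assms(2)[OF that] that by auto
  then show ?thesis unfolding ritmo_colouring_def using assms(1) by simp
qed

lemma ritmo_colouring_map_strict_mono:
  "strict_mono f \<Longrightarrow> ritmo_colouring (map f xs) d \<longleftrightarrow> ritmo_colouring xs d"
  by (intro ritmo_colouring_order_iso) (simp_all add: strict_mono_less)

lemma ritmo_colouring_take:
  assumes "ritmo_colouring xs d"
  shows "ritmo_colouring (take t xs) (take t d)"
  unfolding ritmo_colouring_def
proof (intro conjI allI impI)
  show "length (take t d) = length (take t xs)" using assms by (simp add: ritmo_colouring_length)
  fix i assume "i < length (take t xs)"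
  then have i: "i < t" "i < length xs" by auto
  have "(!) (take t d) ` {j. j < i \<and> take t xs ! i < take t xs ! j} = (!) d ` {j. j < i \<and> xs ! i < xs ! j}"
    using i by (intro image_cong) auto
  then show "1 \<le> take t d ! i"
    and "(!) (take t d) ` {j. j < i \<and> take t xs ! i < take t xs ! j} = {1..<take t d ! i}"
    using i ritmo_colouring_pos[OF assms] ritmo_colouring_image[OF assms] by simp_all
qed

lemma larger_left_append_right:
  fixes A B :: "'a :: order list"
  assumes below: "\<And>a b. a \<in> set A \<Longrightarrow> b \<in> set B \<Longrightarrow> a < b" and t: "t < length B"
  shows "{j. j < length A + t \<and> (A @ B) ! (length A + t) < (A @ B) ! j} =
    (+) (length A) ` {j. j < t \<and> B ! t < B ! j}"
proof (intro equalityI subsetI)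
  fix j assume j: "j \<in> {j. j < length A + t \<and> (A @ B) ! (length A + t) < (A @ B) ! j}"
  have "\<not> j < length A"
  proof
    assume "j < length A"
    then have "A ! j < B ! t" using below t by simp
    then show False using j \<open>j < length A\<close> by (auto simp: nth_append)
  qed
  then show "j \<in> (+) (length A) ` {j. j < t \<and> B ! t < B ! j}"
    using j by (auto simp: nth_append image_iff intro!: exI[of _ "j - length A"])
qed (auto simp: nth_append)

lemma ritmo_colouring_append:
  assumes dA: "ritmo_colouring A dA" and dB: "ritmo_colouring B dB"
    and below: "\<And>a b. a \<in> set A \<Longrightarrow> b \<in> set B \<Longrightarrow> a < b"
  shows "ritmo_colouring (A @ B) (dA @ dB)"
  unfolding ritmo_colouring_def
proof (intro conjI allI impI)
  have lA: "length dA = length A" and lB: "length dB = length B"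
    using dA dB by (simp_all add: ritmo_colouring_length)
  then show "length (dA @ dB) = length (A @ B)" by simp
  fix i assume i: "i < length (A @ B)"
  have "1 \<le> (dA @ dB) ! i \<and>
      (!) (dA @ dB) ` {j. j < i \<and> (A @ B) ! i < (A @ B) ! j} = {1..<(dA @ dB) ! i}"
  proof (cases "i < length A")
    case True
    have "(!) (dA @ dB) ` {j. j < i \<and> (A @ B) ! i < (A @ B) ! j} = (!) dA ` {j. j < i \<and> A ! i < A ! j}"
      using True lA by (intro image_cong) (auto simp: nth_append)
    then show ?thesis
      using True lA ritmo_colouring_pos[OF dA] ritmo_colouring_image[OF dA] by (simp add: nth_append)
  next
    case False
    define t where "t = i - length A"
    have t: "t < length B" "i = length A + t" using i False unfolding t_def by auto
    have "(!) (dA @ dB) ` {j. j < i \<and> (A @ B) ! i < (A @ B) ! j} =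
        (!) (dA @ dB) ` (+) (length A) ` {j. j < t \<and> B ! t < B ! j}"
      using larger_left_append_right[OF below t(1)] t(2) by simp
    also have "\<dots> = (!) dB ` {j. j < t \<and> B ! t < B ! j}"
      unfolding image_image using lA by (intro image_cong) (simp_all add: nth_append)
    finally show ?thesis
      using t lA ritmo_colouring_pos[OF dB] ritmo_colouring_image[OF dB] by (simp add: nth_append)
  qed
  then show "1 \<le> (dA @ dB) ! i"
    and "(!) (dA @ dB) ` {j. j < i \<and> (A @ B) ! i < (A @ B) ! j} = {1..<(dA @ dB) ! i}"
    by simp_all
qed

lemma ritmo_colouring_snoc:
  assumes d: "ritmo_colouring xs d" and c: "1 \<le> c"
    and colours: "(!) d ` {j. j < length xs \<and> x < xs ! j} = {1..<c}"
  shows "ritmo_colouring (xs @ [x]) (d @ [c])"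
  unfolding ritmo_colouring_def
proof (intro conjI allI impI)
  have l: "length d = length xs" using d by (simp add: ritmo_colouring_length)
  then show "length (d @ [c]) = length (xs @ [x])" by simp
  fix i assume i: "i < length (xs @ [x])"
  have "1 \<le> (d @ [c]) ! i \<and>
      (!) (d @ [c]) ` {j. j < i \<and> (xs @ [x]) ! i < (xs @ [x]) ! j} = {1..<(d @ [c]) ! i}"
  proof (cases "i < length xs")
    case True
    have "(!) (d @ [c]) ` {j. j < i \<and> (xs @ [x]) ! i < (xs @ [x]) ! j} = (!) d ` {j. j < i \<and> xs ! i < xs ! j}"
      using True l by (intro image_cong) (auto simp: nth_append)
    then show ?thesis
      using True l ritmo_colouring_pos[OF d] ritmo_colouring_image[OF d] by (simp add: nth_append)
  next
    case False
    then have i: "i = length xs" using i by simp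
    have "(!) (d @ [c]) ` {j. j < i \<and> (xs @ [x]) ! i < (xs @ [x]) ! j} = (!) d ` {j. j < length xs \<and> x < xs ! j}"
      using i l by (intro image_cong) (auto simp: nth_append)
    then show ?thesis using colours c i l by (simp add: nth_append)
  qed
  then show "1 \<le> (d @ [c]) ! i"
    and "(!) (d @ [c]) ` {j. j < i \<and> (xs @ [x]) ! i < (xs @ [x]) ! j} = {1..<(d @ [c]) ! i}"
    by simp_all
qed

lemma ritmo_colouring_decreasing: "ritmo_colouring (rev [1..<Suc m]) [1..<Suc m]"
  unfolding ritmo_colouring_def
proof (intro conjI allI impI)
  fix i assume "i < length (rev [1..<Suc m])"
  then have i: "i < m" by (simp del: upt_Suc)
  have "{j. j < i \<and> rev [1..<Suc m] ! i < rev [1..<Suc m] ! j} = {..<i}"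
    using i by (auto simp: rev_nth simp del: upt_Suc)
  moreover have "(!) [1..<Suc m] ` {..<i} = Suc ` {..<i}"
    using i by (intro image_cong) (simp_all del: upt_Suc)
  then have "(!) [1..<Suc m] ` {..<i} = {1..<Suc i}"
    by (simp add: image_Suc_lessThan atLeastLessThanSuc_atLeastAtMost)
  ultimately show "1 \<le> [1..<Suc m] ! i"
    and "(!) [1..<Suc m] ` {j. j < i \<and> rev [1..<Suc m] ! i < rev [1..<Suc m] ! j} = {1..<[1..<Suc m] ! i}"
    using i by (simp_all del: upt_Suc)
qed simp

section \<open>Colours, decreasing chains and avoidance\<close>

definition decreasing_chain :: "nat list \<Rightarrow> nat list \<Rightarrow> bool" where
  "decreasing_chain xs is \<longleftrightarrow> sorted_wrt (<) is \<and> (\<forall>i\<in>set is. i < length xs) \<and>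
     sorted_wrt (>) (map ((!) xs) is)"

lemma sorted_wrt_last: "sorted_wrt P zs \<Longrightarrow> y \<in> set (butlast zs) \<Longrightarrow> P y (last zs)"
  by (metis append_butlast_last_id in_set_conv_decomp last.simps list.distinct(1)
      sorted_wrt_append butlast.simps(1) empty_iff empty_set)

lemma decreasing_chain_length_le_colour:
  assumes d: "ritmo_colouring xs d"
  shows "decreasing_chain xs is \<Longrightarrow> is \<noteq> [] \<Longrightarrow> length is \<le> d ! last is"
proof (induction "is" rule: rev_induct)
  case (snoc i js)
  have i: "i < length xs" using snoc.prems unfolding decreasing_chain_def by simp
  show ?case
  proof (cases "js = []")
    case True
    then show ?thesis using ritmo_colouring_pos[OF d i] by simp
  next
    case False
    then have "last js \<in> set js" by simp
    then have "last js < i" "xs ! i < xs ! last js" "decreasing_chain xs js"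
      using snoc.prems(1) unfolding decreasing_chain_def by (simp_all add: sorted_wrt_append)
    then have "length js \<le> d ! last js" "d ! last js < d ! i"
      using snoc.IH False ritmo_colouring_less[OF d _ i] by auto
    then show ?thesis by simp
  qed
qed simp

lemma decreasing_chain_of_colour:
  assumes d: "ritmo_colouring xs d"
  shows "1 \<le> c \<Longrightarrow> i < length xs \<Longrightarrow> c \<le> d ! i \<Longrightarrow>
    \<exists>is. decreasing_chain xs is \<and> length is = c \<and> is \<noteq> [] \<and> last is = i"
proof (induction c arbitrary: i rule: nat_induct_at_least)
  case base
  then show ?case by (intro exI[of _ "[i]"]) (simp add: decreasing_chain_def)
next
  case (Suc c)
  obtain j where j: "j < i" "xs ! i < xs ! j" "d ! j = c"
    using ritmo_colouring_witness[OF d Suc.prems(1) Suc.hyps] Suc.prems(2) by auto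
  then obtain js where js: "decreasing_chain xs js" "length js = c" "js \<noteq> []" "last js = j"
    using Suc.IH[of j] Suc.prems(1) by auto
  have "y < i \<and> xs ! i < xs ! y" if "y \<in> set js" for y
  proof (cases "y = last js")
    case False
    then have "y \<in> set (butlast js)" using that js(3) by (metis append_butlast_last_id rotate1.simps(2) set_ConsD set_rotate1)
    then have "y < last js" "last (map ((!) xs) js) < xs ! y"
      using js(1) sorted_wrt_last[of "(<)" js] sorted_wrt_last[of "(>)" "map ((!) xs) js"]
      unfolding decreasing_chain_def by (simp_all add: map_butlast[symmetric])
    then show ?thesis using js(3,4) j by (simp add: last_map)
  qed (use js(4) j in simp)
  then have "decreasing_chain xs (js @ [i])"
    using js(1) Suc.prems(1) unfolding decreasing_chain_def by (simp add: sorted_wrt_append)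
  then show ?case using js(2) by (intro exI[of _ "js @ [i]"]) simp
qed

lemma pat_decreasing_chain:
  assumes "decreasing_chain xs is"
  shows "pat (set is) xs = decr (length is)"
proof -
  have s: "sorted_wrt (<) is" and b: "\<forall>i\<in>set is. i < length xs"
    and dec: "sorted_wrt (>) (map ((!) xs) is)" using assms unfolding decreasing_chain_def by auto
  have "filter (\<lambda>i. i \<in> set is) [0..<length xs] = is"
    using s b by (intro sorted_distinct_set_unique) (auto simp: strict_sorted_iff sorted_wrt_filter)
  then show ?thesis
    unfolding pat_def nths_conv_filter using std_sorted_decreasing[OF dec] by simp
qed

lemma decreasing_chain_if_pat_decr:
  assumes ds: "distinct xs" and I: "pat I xs = decr n"
  shows "decreasing_chain xs (filter (\<lambda>i. i \<in> I) [0..<length xs]) \<and>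
    length (filter (\<lambda>i. i \<in> I) [0..<length xs]) = n"
proof -
  define "is" where "is = filter (\<lambda>i. i \<in> I) [0..<length xs]"
  define ys where "ys = map ((!) xs) is"
  have std_ys: "std ys = decr n" using I unfolding pat_def nths_conv_filter ys_def is_def .
  then have len: "length ys = n" by (metis length_decr length_std)
  have s: "sorted_wrt (<) is" and b: "\<forall>i\<in>set is. i < length xs"
    unfolding is_def by (simp_all add: sorted_wrt_filter)
  then have "distinct ys"
    unfolding ys_def using ds by (simp add: distinct_map inj_on_def nth_eq_iff_index_eq strict_sorted_iff)
  then have "sorted_wrt (>) ys"
    unfolding sorted_wrt_iff_nth_less
  proof (intro allI impI)
    fix p q assume "p < q" "q < length ys"
    then have "std ys ! q < std ys ! p" using std_ys len by (simp add: nth_decr)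
    then show "ys ! p > ys ! q" using std_less_iff[OF \<open>distinct ys\<close>] \<open>p < q\<close> \<open>q < length ys\<close> by simp
  qed
  then show ?thesis using s b len unfolding decreasing_chain_def ys_def is_def[symmetric] by simp
qed

lemma avoids_decr_iff_no_chain:
  assumes ds: "distinct xs"
  shows "avoids xs (decr n) \<longleftrightarrow> \<not> (\<exists>is. decreasing_chain xs is \<and> length is = n)"
proof
  assume av: "avoids xs (decr n)"
  show "\<not> (\<exists>is. decreasing_chain xs is \<and> length is = n)"
  proof
    assume "\<exists>is. decreasing_chain xs is \<and> length is = n"
    then obtain "is" where c: "decreasing_chain xs is" "length is = n" by blast
    then have "set is \<subseteq> {0..<length xs}" "pat (set is) xs = decr n"
      using pat_decreasing_chain[OF c(1)] by (auto simp: decreasing_chain_def)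
    then show False using av unfolding avoids_def by blast
  qed
next
  assume no_chain: "\<not> (\<exists>is. decreasing_chain xs is \<and> length is = n)"
  show "avoids xs (decr n)" unfolding avoids_def
  proof
    assume "\<exists>I\<subseteq>{0..<length xs}. pat I xs = decr n"
    then obtain I where "pat I xs = decr n" by blast
    then show False using no_chain decreasing_chain_if_pat_decr[OF ds] by blast
  qed
qed

lemma avoids_decr_iff_colours_less:
  assumes ds: "distinct xs" and d: "ritmo_colouring xs d" and n: "1 \<le> n"
  shows "avoids xs (decr n) \<longleftrightarrow> (\<forall>i<length xs. d ! i < n)"
proof
  assume av: "avoids xs (decr n)"
  show "\<forall>i<length xs. d ! i < n"
  proof (intro allI impI)
    fix i assume i: "i < length xs"
    show "d ! i < n"
    proof (rule ccontr)
      assume "\<not> d ! i < n"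
      then obtain "is" where "decreasing_chain xs is" "length is = n"
        using decreasing_chain_of_colour[OF d n i] by auto
      then show False using av avoids_decr_iff_no_chain[OF ds] by blast
    qed
  qed
next
  assume less: "\<forall>i<length xs. d ! i < n"
  show "avoids xs (decr n)"
  proof (rule avoids_decr_iff_no_chain[OF ds, THEN iffD2], rule notI)
    assume "\<exists>is. decreasing_chain xs is \<and> length is = n"
    then obtain "is" where c: "decreasing_chain xs is" "length is = n" by blast
    then have "is \<noteq> []" using n by auto
    moreover from this have "last is < length xs" using c(1) unfolding decreasing_chain_def by simp
    ultimately show False
      using decreasing_chain_length_le_colour[OF d c(1)] less c(2) by fastforce
  qed
qed

lemma avoids_decr_iff_ritmo_less:
  "distinct xs \<Longrightarrow> 1 \<le> n \<Longrightarrow> avoids xs (decr n) \<longleftrightarrow> (\<forall>i<length xs. ritmo xs ! i < n)"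
  using avoids_decr_iff_colours_less ritmo_colouring_ritmo by blast

lemma decreasing_chain_std:
  assumes "distinct W" "decreasing_chain (std W) is"
  shows "decreasing_chain W is"
proof -
  have b: "\<forall>i\<in>set is. i < length W" and dec: "sorted_wrt (>) (map ((!) (std W)) is)"
    using assms(2) unfolding decreasing_chain_def by auto
  have "sorted_wrt (>) (map ((!) W) is)"
    unfolding sorted_wrt_iff_nth_less
  proof (intro allI impI)
    fix p q assume pq: "p < q" "q < length (map ((!) W) is)"
    then have "std W ! (is ! q) < std W ! (is ! p)"
      using sorted_wrt_nth_less[OF dec, of p q] by simp
    then show "map ((!) W) is ! p > map ((!) W) is ! q"
      using std_less_iff[OF assms(1)] b pq by simp
  qed
  then show ?thesis using assms(2) unfolding decreasing_chain_def by simp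
qed

lemma decreasing_chain_take_drop:
  assumes "decreasing_chain (take k (drop i s)) is"
  shows "decreasing_chain s (map ((+) i) is)"
proof -
  have b: "\<forall>j\<in>set is. i + j < length s \<and> j < k"
    using assms unfolding decreasing_chain_def by auto
  then have eq: "map ((!) (take k (drop i s))) is = map ((!) s) (map ((+) i) is)" by auto
  have "sorted_wrt (>) (map ((!) (take k (drop i s))) is)" "sorted_wrt (<) is"
    using assms unfolding decreasing_chain_def by simp_all
  then have "sorted_wrt (>) (map ((!) s) (map ((+) i) is))" "sorted_wrt (<) (map ((+) i) is)"
    unfolding eq by (simp_all add: sorted_wrt_map)
  then show ?thesis using b unfolding decreasing_chain_def by auto
qed

lemma Av_iff: "s \<in> Av t \<longleftrightarrow> is_perm s \<and> 1 \<le> length s \<and> avoids s t"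
  unfolding Av_def Av_m_def by auto

section \<open>Windows and coloured walks\<close>

definition window :: "nat \<Rightarrow> nat \<Rightarrow> nat list \<Rightarrow> cperm" where
  "window k i s = (std (take k (drop i s)), take k (drop i (ritmo s)))"

lemma cpat_S_atLeastLessThan: "cpat {i..<i + k} (S s) = window k i s"
  unfolding cpat_def pat_def S_def window_def by (simp add: nths_atLeastLessThan)

lemma coloured_walk_conv_window: "coloured_walk k s = map (\<lambda>i. window k i s) [0..<length s - k + 1]"
  unfolding coloured_walk_def by (simp add: cpat_S_atLeastLessThan)

lemma length_coloured_walk: "length (coloured_walk k s) = length s - k + 1"
  by (simp add: coloured_walk_conv_window)

lemma nth_coloured_walk: "i < length s - k + 1 \<Longrightarrow> coloured_walk k s ! i = window k i s"
  by (simp add: coloured_walk_conv_window del: upt_Suc)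

lemma last_coloured_walk: "last (coloured_walk k s) = window k (length s - k) s"
  by (simp add: coloured_walk_conv_window last_map)

lemma en_S_eq_window: "k \<le> length s \<Longrightarrow> en k (S s) = window k (length s - k) s"
  using cpat_S_atLeastLessThan[of "length s - k" k s] by (simp add: en_def S_def)

lemma src_window:
  assumes "distinct s" "1 \<le> k"
  shows "src k (window k i s) = window (k - 1) i s"
proof -
  have "std (take (k - 1) (drop 0 (std (take k (drop i s))))) =
      std (take (k - 1) (drop 0 (take k (drop i s))))"
    using assms(1) by (intro std_take_drop_std) simp
  then have "std (take (k - 1) (std (take k (drop i s)))) = std (take (k - 1) (drop i s))"
    using assms(2) by (simp add: min_def)
  moreover have "{0..<k - 1} = {0..<0 + (k - 1)}" by simp
  ultimately show ?thesis
    using assms(2) unfolding src_def be_def cpat_def pat_def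
    by (simp only: nths_atLeastLessThan) (simp add: window_def min_def)
qed

lemma tgt_window:
  assumes "distinct s" "1 \<le> k" "i + k \<le> length s"
  shows "tgt k (window k i s) = window (k - 1) (Suc i) s"
proof -
  have "std (take (k - 1) (drop 1 (std (take k (drop i s))))) =
      std (take (k - 1) (drop 1 (take k (drop i s))))"
    using assms(1) by (intro std_take_drop_std) simp
  then have "std (take (k - 1) (drop 1 (std (take k (drop i s))))) = std (take (k - 1) (drop (Suc i) s))"
    using assms(2) by (simp add: drop_take)
  moreover have "{length (fst (window k i s)) - (k - 1)..<length (fst (window k i s))} = {1..<1 + (k - 1)}"
    using assms(2,3) by (simp add: window_def)
  ultimately show ?thesis
    using assms(2) unfolding tgt_def en_def
    by (simp only: cpat_def pat_def nths_atLeastLessThan) (simp add: window_def drop_take)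
qed

lemma avoids_std_take_drop:
  assumes ds: "distinct s" and av: "avoids s (decr n)"
  shows "avoids (std (take k (drop i s))) (decr n)"
  unfolding avoids_decr_iff_no_chain[OF distinct_std[OF distinct_take[OF distinct_drop[OF ds]]]]
proof
  assume "\<exists>is. decreasing_chain (std (take k (drop i s))) is \<and> length is = n"
  then obtain "is" where "decreasing_chain (take k (drop i s)) is" "length is = n"
    using decreasing_chain_std[of "take k (drop i s)"] ds by auto
  then show False
    using decreasing_chain_take_drop av avoids_decr_iff_no_chain[OF ds] by (metis length_map)
qed

lemma window_inherited:
  assumes s: "s \<in> Av (decr n)" and ik: "i + k \<le> length s" and k: "1 \<le> k" and n: "2 \<le> n"
  shows "window k i s \<in> inherited n k"
proof -
  have ds: "distinct s" and av: "avoids s (decr n)" using s by (auto simp: Av_iff is_perm_def)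
  have less_n: "\<forall>i<length s. ritmo s ! i < n"
    using av avoids_decr_iff_ritmo_less[OF ds] n by simp
  define T where "T = take (i + k) s"
  define r where "r = std T"
  have dT: "distinct T" and lr: "length r = i + k" using ds ik unfolding T_def r_def by simp_all
  have r_perm: "is_perm r" unfolding r_def using is_perm_std[OF dT] .
  have "ritmo_colouring T (take (i + k) (ritmo s))"
    unfolding T_def by (rule ritmo_colouring_take[OF ritmo_colouring_ritmo[OF ds]])
  then have "ritmo_colouring r (take (i + k) (ritmo s))"
    unfolding r_def using ritmo_colouring_order_iso[of "std T" T] std_less_iff[OF dT] by simp
  then have ritmo_r: "ritmo r = take (i + k) (ritmo s)"
    using ritmo_eqI is_perm_distinct[OF r_perm] by blast
  have "avoids r (decr n)"
    using less_n lr ik n avoids_decr_iff_ritmo_less[OF is_perm_distinct[OF r_perm]] ritmo_r by simp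
  then have r_Av: "r \<in> Av (decr n)" using r_perm lr k by (simp add: Av_iff)
  have "std (take k (drop i r)) = std (take k (drop i T))"
    unfolding r_def by (rule std_take_drop_std[OF dT])
  also have "take k (drop i T) = take k (drop i s)"
    unfolding T_def by (simp add: take_drop add.commute)
  finally have "std (take k (drop i r)) = std (take k (drop i s))" .
  moreover have "take k (drop i (ritmo r)) = take k (drop i (ritmo s))"
    unfolding ritmo_r by (simp add: take_drop add.commute)
  ultimately have en_r: "en k (S r) = window k i s"
    using en_S_eq_window[of k r] lr by (simp add: window_def)
  have "fst (window k i s) \<in> Av_m k (decr n)"
    using is_perm_std[of "take k (drop i s)"] avoids_std_take_drop[OF ds av] ds ik
    by (simp add: Av_m_def window_def)
  then show ?thesis
    using r_Av lr en_r unfolding inherited_def by (auto intro!: bexI[of _ r])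
qed

lemma is_walk_coloured_walk:
  assumes s: "s \<in> Av (decr n)" and k: "1 \<le> k" and ks: "k \<le> length s" and n: "2 \<le> n"
  shows "is_walk k n (coloured_walk k s)"
  unfolding is_walk_def
proof (intro conjI allI impI subsetI)
  have ds: "distinct s" using s by (simp add: Av_iff is_perm_distinct)
  fix e assume "e \<in> set (coloured_walk k s)"
  then have "e \<in> (\<lambda>i. window k i s) ` {0..<length s - k + 1}"
    by (simp add: coloured_walk_conv_window del: upt_Suc)
  then obtain i where "i < length s - k + 1" "e = window k i s" by auto
  then show "e \<in> ov_edges k n"
    using window_inherited[OF s _ k n] ks by (simp add: ov_edges_def)
next
  have ds: "distinct s" using s by (simp add: Av_iff is_perm_distinct)
  fix i assume "Suc i < length (coloured_walk k s)"
  then have i: "Suc i < length s - k + 1" by (simp add: length_coloured_walk)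
  then show "tgt k (coloured_walk k s ! i) = src k (coloured_walk k s ! Suc i)"
    using tgt_window[OF ds k, of i] src_window[OF ds k, of "Suc i"] by (simp add: nth_coloured_walk)
qed

section \<open>Inherited coloured permutations\<close>

lemma window_props:
  assumes "distinct r" "i + k \<le> length r" "window k i r = (pi, c)"
  shows "length pi = k" and "length c = k"
    and "\<And>p q. p < k \<Longrightarrow> q < k \<Longrightarrow> pi ! p < pi ! q \<longleftrightarrow> r ! (i + p) < r ! (i + q)"
    and "\<And>q. q < k \<Longrightarrow> c ! q = ritmo r ! (i + q)"
proof -
  have pi: "pi = std (take k (drop i r))" and c: "c = take k (drop i (ritmo r))"
    using assms(3) by (simp_all add: window_def)
  show "length pi = k" "length c = k" using assms(1,2) by (simp_all add: pi c)
  show "pi ! p < pi ! q \<longleftrightarrow> r ! (i + p) < r ! (i + q)" if "p < k" "q < k" for p q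
    using that assms(1,2) by (simp add: pi std_less_iff)
  show "c ! q = ritmo r ! (i + q)" if "q < k" for q
    using that assms(1,2) by (simp add: c)
qed

lemma inherited_witness:
  assumes "e \<in> inherited n k"
  obtains r where "r \<in> Av (decr n)" "k \<le> length r" "window k (length r - k) r = e"
  using assms en_S_eq_window unfolding inherited_def by fastforce

lemma inherited_colours:
  assumes e: "(pi, c) \<in> inherited n k" and n: "2 \<le> n"
  shows "is_perm pi" and "length pi = k" and "length c = k" and "\<And>q. q < k \<Longrightarrow> 1 \<le> c ! q \<and> c ! q < n"
proof -
  show "is_perm pi" "length pi = k" using e by (simp_all add: inherited_def Av_m_def)
  obtain r where r: "r \<in> Av (decr n)" "k \<le> length r" "window k (length r - k) r = (pi, c)"
    using inherited_witness[OF e] .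
  then have dr: "distinct r" and av: "avoids r (decr n)" by (auto simp: Av_iff is_perm_distinct)
  show "length c = k" using window_props(2)[OF dr _ r(3)] r(2) by simp
  show "1 \<le> c ! q \<and> c ! q < n" if "q < k" for q
    using window_props(4)[OF dr _ r(3) that] r(2) that n av avoids_decr_iff_ritmo_less[OF dr]
      ritmo_colouring_pos[OF ritmo_colouring_ritmo[OF dr]]
    by auto
qed

lemma inherited_larger_colour_less:
  assumes e: "(pi, c) \<in> inherited n k" and q: "q < k - 1" "pi ! (k - 1) < pi ! q"
  shows "c ! q < c ! (k - 1)"
proof -
  obtain r where r: "r \<in> Av (decr n)" "k \<le> length r" "window k (length r - k) r = (pi, c)"
    using inherited_witness[OF e] .
  then have dr: "distinct r" by (simp add: Av_iff is_perm_distinct)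
  let ?i = "length r - k"
  have "r ! (?i + (k - 1)) < r ! (?i + q)" using window_props(3)[OF dr _ r(3)] q r(2) by simp
  then have "ritmo r ! (?i + q) < ritmo r ! (?i + (k - 1))"
    using ritmo_colouring_less[OF ritmo_colouring_ritmo[OF dr]] q r(2) by simp
  then show ?thesis using window_props(4)[OF dr _ r(3)] q r(2) by simp
qed

text \<open>A larger entry of colour c-1 precedes the last entry of the window. If it lies before the
window, it also lies above the entry whose value is one less than the last one (if any), so that
entry has colour at least c.\<close>

lemma inherited_last_colour_source:
  assumes e: "(pi, c) \<in> inherited n k" and k: "1 \<le> k" and c2: "2 \<le> c ! (k - 1)"
  shows "(\<exists>q<k - 1. pi ! (k - 1) < pi ! q \<and> c ! q = c ! (k - 1) - 1) \<or>
    (\<exists>q<k - 1. pi ! q + 1 = pi ! (k - 1) \<and> c ! (k - 1) \<le> c ! q) \<or> pi ! (k - 1) = 1"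
proof -
  obtain r where r: "r \<in> Av (decr n)" "k \<le> length r" "window k (length r - k) r = (pi, c)"
    using inherited_witness[OF e] .
  then have dr: "distinct r" by (simp add: Av_iff is_perm_distinct)
  have d: "ritmo_colouring r (ritmo r)" using ritmo_colouring_ritmo[OF dr] .
  define i where "i = length r - k"
  have ord: "\<And>p q. p < k \<Longrightarrow> q < k \<Longrightarrow> pi ! p < pi ! q \<longleftrightarrow> r ! (i + p) < r ! (i + q)"
    and col: "\<And>q. q < k \<Longrightarrow> c ! q = ritmo r ! (i + q)"
    and in_r: "\<And>q. q < k \<Longrightarrow> i + q < length r"
    using window_props[OF dr _ r(3)] r(2) unfolding i_def by auto
  define x where "x = i + (k - 1)"
  have "1 \<le> c ! (k - 1) - 1" "c ! (k - 1) - 1 < ritmo r ! x"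
    using c2 col[of "k - 1"] k unfolding x_def by simp_all
  then obtain j where j: "j < x" "r ! x < r ! j" "ritmo r ! j = c ! (k - 1) - 1"
    using ritmo_colouring_witness[OF d in_r[of "k - 1"]] k unfolding x_def by auto
  show ?thesis
  proof (cases "i \<le> j")
    case True
    then have "j - i < k - 1" "j = i + (j - i)" using j(1) unfolding x_def by auto
    then show ?thesis using ord[of "k - 1" "j - i"] col[of "j - i"] j k unfolding x_def by auto
  next
    case False
    have pi_perm: "is_perm pi" and lpi: "length pi = k" using e by (simp_all add: inherited_def Av_m_def)
    have last_range: "pi ! (k - 1) \<in> {1..k}"
      using is_perm_nth_bounds[OF pi_perm, of "k - 1"] lpi k by simp
    show ?thesis
    proof (cases "pi ! (k - 1) = 1")
      case False
      then have "pi ! (k - 1) - 1 \<in> set pi" using last_range pi_perm lpi unfolding is_perm_def by auto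
      then obtain q where q: "q < k" "pi ! q = pi ! (k - 1) - 1" using lpi by (metis in_set_conv_nth)
      moreover have "q \<noteq> k - 1" using q(2) last_range by auto
      ultimately have q1: "q < k - 1" "pi ! q + 1 = pi ! (k - 1)" "pi ! q < pi ! (k - 1)"
        using False last_range by auto
      then have "r ! (i + q) < r ! j" using ord[of q "k - 1"] q j(2) k unfolding x_def by simp
      then have "ritmo r ! j < ritmo r ! (i + q)"
        using ritmo_colouring_less[OF d _ in_r[OF q(1)]] \<open>\<not> i \<le> j\<close> by simp
      then have "c ! (k - 1) \<le> c ! q" using col[OF q(1)] j(3) c2 by simp
      then show ?thesis using q1 by blast
    qed simp
  qed
qed

lemma finite_inherited:
  assumes n: "2 \<le> n"
  shows "finite (inherited n k)"
proof (rule finite_subset)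
  show "inherited n k \<subseteq> {xs. set xs \<subseteq> {0..k} \<and> length xs = k} \<times> {xs. set xs \<subseteq> {0..<n} \<and> length xs = k}"
  proof (clarify)
    fix pi c assume e: "(pi, c) \<in> inherited n k"
    note props = inherited_colours[OF e n]
    have "set pi \<subseteq> {0..k}" using props(1,2) unfolding is_perm_def by auto
    moreover have "set c \<subseteq> {0..<n}" using props(3,4) by (auto simp: in_set_conv_nth)
    ultimately show "pi \<in> {xs. set xs \<subseteq> {0..k} \<and> length xs = k} \<and> c \<in> {xs. set xs \<subseteq> {0..<n} \<and> length xs = k}"
      using props(2,3) by simp
  qed
qed (intro finite_cartesian_product finite_lists_length_eq; simp)

section \<open>Appending a new last entry\<close>

definition shift_from :: "nat \<Rightarrow> nat \<Rightarrow> nat" where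
  "shift_from v y = (if v \<le> y then Suc y else y)"

definition snoc_value :: "nat \<Rightarrow> nat list \<Rightarrow> nat list" where
  "snoc_value v s = map (shift_from v) s @ [v]"

lemma strict_mono_shift_from: "strict_mono (shift_from v)"
  by (auto simp: strict_mono_def shift_from_def)

lemma length_snoc_value [simp]: "length (snoc_value v s) = Suc (length s)"
  by (simp add: snoc_value_def)

lemma is_perm_snoc_value:
  assumes s: "is_perm s" and v: "1 \<le> v" "v \<le> Suc (length s)"
  shows "is_perm (snoc_value v s)"
proof (rule is_perm_if_distinct_subset)
  have "v \<notin> set (map (shift_from v) s)" by (auto simp: shift_from_def)
  then show "distinct (snoc_value v s)"
    using is_perm_distinct[OF s] strict_mono_shift_from
    by (simp add: snoc_value_def distinct_map strict_mono_imp_inj_on)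
  show "set (snoc_value v s) \<subseteq> {1..length (snoc_value v s)}"
    using s v by (auto simp: snoc_value_def shift_from_def is_perm_def)
qed

lemma ritmo_snoc_value:
  assumes ds: "distinct s" and cn: "1 \<le> cn"
    and colours: "(!) (ritmo s) ` {j. j < length s \<and> v \<le> s ! j} = {1..<cn}"
  shows "ritmo (snoc_value v s) = ritmo s @ [cn]"
proof (rule ritmo_eqI)
  show "distinct (snoc_value v s)"
    using ds strict_mono_shift_from
    by (auto simp: snoc_value_def distinct_map strict_mono_imp_inj_on shift_from_def)
  have col: "ritmo_colouring (map (shift_from v) s) (ritmo s)"
    using ritmo_colouring_ritmo[OF ds] ritmo_colouring_map_strict_mono[OF strict_mono_shift_from] by blast
  have "{j. j < length (map (shift_from v) s) \<and> v < map (shift_from v) s ! j} =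
      {j. j < length s \<and> v \<le> s ! j}"
    by (auto simp: shift_from_def split: if_splits)
  then have "(!) (ritmo s) ` {j. j < length (map (shift_from v) s) \<and> v < map (shift_from v) s ! j} = {1..<cn}"
    using colours by simp
  then show "ritmo_colouring (snoc_value v s) (ritmo s @ [cn])"
    unfolding snoc_value_def by (rule ritmo_colouring_snoc[OF col cn])
qed

lemma window_snoc_value:
  assumes "distinct s" "i + k \<le> length s" "ritmo (snoc_value v s) = ritmo s @ [cn]"
  shows "window k i (snoc_value v s) = window k i s"
proof -
  have "take k (drop i (snoc_value v s)) = map (shift_from v) (take k (drop i s))"
    using assms(2) by (simp add: snoc_value_def take_map drop_map)
  moreover have "take k (drop i (ritmo s @ [cn])) = take k (drop i (ritmo s))"
    using assms(1,2) by simp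
  ultimately show ?thesis
    using assms std_map_strict_mono[OF strict_mono_shift_from] by (simp add: window_def)
qed

lemma coloured_walk_snoc_value:
  assumes "distinct s" "k \<le> length s" "ritmo (snoc_value v s) = ritmo s @ [cn]"
  shows "coloured_walk k (snoc_value v s) =
    coloured_walk k s @ [window k (Suc (length s - k)) (snoc_value v s)]"
proof -
  have "coloured_walk k (snoc_value v s) = map (\<lambda>i. window k i (snoc_value v s)) [0..<Suc (length s - k)] @
      [window k (Suc (length s - k)) (snoc_value v s)]"
    using assms(2) by (simp add: coloured_walk_conv_window Suc_diff_le)
  also have "map (\<lambda>i. window k i (snoc_value v s)) [0..<Suc (length s - k)] =
      map (\<lambda>i. window k i s) [0..<Suc (length s - k)]"
    using assms(2) window_snoc_value[OF assms(1) _ assms(3)] by (intro map_cong) auto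
  also have "\<dots> = coloured_walk k s"
    by (simp add: coloured_walk_conv_window del: upt_Suc)
  finally show ?thesis .
qed

lemma ritmo_colours_above_threshold:
  assumes d: "ritmo_colouring s d" and cn: "1 \<le> cn"
    and reached: "cn = 1 \<or> (\<exists>j<length s. v \<le> s ! j \<and> d ! j = cn - 1)"
    and bounded: "\<And>j. j < length s \<Longrightarrow> v \<le> s ! j \<Longrightarrow> d ! j < cn"
  shows "(!) d ` {j. j < length s \<and> v \<le> s ! j} = {1..<cn}"
proof (intro equalityI subsetI)
  fix x assume "x \<in> (!) d ` {j. j < length s \<and> v \<le> s ! j}"
  then show "x \<in> {1..<cn}" using bounded ritmo_colouring_pos[OF d] by auto
next
  fix y assume y: "y \<in> {1..<cn}"
  then obtain j where j: "j < length s" "v \<le> s ! j" "d ! j = cn - 1" using reached by auto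
  show "y \<in> (!) d ` {j. j < length s \<and> v \<le> s ! j}"
  proof (cases "y = cn - 1")
    case False
    then have "1 \<le> y" "y < d ! j" using y j(3) by auto
    then obtain j' where "j' < j" "s ! j < s ! j'" "d ! j' = y"
      using ritmo_colouring_witness[OF d j(1)] by blast
    then show ?thesis using j by (intro image_eqI[of _ _ j']) auto
  qed (use j in \<open>auto intro!: image_eqI[of _ _ j]\<close>)
qed

text \<open>Take v maximal in (a, b] such that some entry \<open>\<ge> v\<close> has colour cn - 1 (any v if cn = 1).
If v < b, an entry \<open>\<ge> v\<close> of colour \<open>\<ge> cn\<close> would have a larger entry of colour cn - 1 to
its left, contradicting the maximality of v.\<close>

lemma colour_threshold_exists:
  assumes d: "ritmo_colouring s d" and ds: "distinct s" and ab: "a < b"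
    and high: "\<And>j. j < length s \<Longrightarrow> b \<le> s ! j \<Longrightarrow> d ! j < cn"
    and reached: "cn = 1 \<or> (\<exists>j<length s. a < s ! j \<and> d ! j = cn - 1)"
    and cn: "1 \<le> cn"
  shows "\<exists>v. a < v \<and> v \<le> b \<and> (!) d ` {j. j < length s \<and> v \<le> s ! j} = {1..<cn}"
proof -
  define P where "P = (\<lambda>v. cn = 1 \<or> (\<exists>j<length s. v \<le> s ! j \<and> d ! j = cn - 1))"
  define V where "V = {v. Suc a \<le> v \<and> v \<le> b \<and> P v}"
  have "Suc a \<in> V" using reached ab unfolding V_def P_def by (auto simp: Suc_le_eq)
  moreover have "finite V" unfolding V_def by simp
  ultimately have "Max V \<in> V" and V_max: "\<And>v. v \<in> V \<Longrightarrow> v \<le> Max V"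
    using Max_in by auto
  define v where "v = Max V"
  have v: "a < v" "v \<le> b" "P v" using \<open>Max V \<in> V\<close> unfolding v_def V_def by auto
  have not_P: "\<not> P (Suc v)" if "v < b"
  proof
    assume "P (Suc v)"
    then have "Suc v \<in> V" using that v(1) unfolding V_def by simp
    then show False using V_max unfolding v_def by fastforce
  qed
  have "d ! j < cn" if j: "j < length s" "v \<le> s ! j" for j
  proof (rule ccontr)
    assume j_ge: "\<not> d ! j < cn"
    show False
    proof (cases "v < b")
      case False
      then show False using high j j_ge v(2) by fastforce
    next
      case True
      then have c1: "cn \<noteq> 1" and none: "\<And>j'. j' < length s \<Longrightarrow> Suc v \<le> s ! j' \<Longrightarrow> d ! j' \<noteq> cn - 1"
        using not_P unfolding P_def by auto
      obtain j1 where j1: "j1 < length s" "v \<le> s ! j1" "d ! j1 = cn - 1" using v(3) c1 unfolding P_def by blast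
      show False
      proof (cases "Suc v \<le> s ! j")
        case True
        have "1 \<le> cn - 1" "cn - 1 < d ! j" using j_ge c1 cn by auto
        then obtain j' where "j' < j" "s ! j < s ! j'" "d ! j' = cn - 1"
          using ritmo_colouring_witness[OF d j(1)] by blast
        then show False using none[of j'] True j by simp
      next
        case False
        then have "s ! j = v" using j by simp
        then have "s ! j1 = v \<Longrightarrow> j1 = j" using j(1) j1(1) ds by (metis nth_eq_iff_index_eq)
        then show False using none[of j1] j1 j_ge c1 cn False by fastforce
      qed
    qed
  qed
  then show ?thesis
    using ritmo_colours_above_threshold[OF d cn] v unfolding P_def by blast
qed

section \<open>Realising walks\<close>

text \<open>The assumption that every colour 1, ..., n - 2 occurs in s is what allows an arbitrary
prescribed colour \<open>c ! (k - 1) < n\<close> for a new last entry, even when that entry is placed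
below everything else.\<close>

locale walk_extension =
  fixes n k :: nat and s pi c :: "nat list"
  assumes n: "2 \<le> n" and k: "1 \<le> k" and s_Av: "s \<in> Av (decr n)" and k_le: "k \<le> length s"
    and cover: "{1..n - 2} \<subseteq> set (ritmo s)"
    and edge: "(pi, c) \<in> inherited n k"
    and connects: "window (k - 1) (Suc (length s - k)) s = src k (pi, c)"
begin

definition start :: nat where
  "start = Suc (length s - k)"

text \<open>The last k - 1 entries of s, which become the first k - 1 entries of the new window.\<close>

definition overlap :: "nat list" where
  "overlap = drop start s"

definition lower :: "nat set" where
  "lower = {q. q < k - 1 \<and> pi ! q < pi ! (k - 1)}"

definition upper :: "nat set" where
  "upper = {q. q < k - 1 \<and> pi ! (k - 1) < pi ! q}"

text \<open>The new last value v must lie in the interval (gap_low, gap_high] for the new window to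
have the pattern pi.\<close>

definition gap_low :: nat where
  "gap_low = Max (insert 0 ((!) overlap ` lower))"

definition gap_high :: nat where
  "gap_high = Min (insert (Suc (length s)) ((!) overlap ` upper))"

lemma s_perm: "is_perm s" and s_distinct: "distinct s" and s_avoids: "avoids s (decr n)"
  using s_Av by (simp_all add: Av_iff is_perm_distinct)

lemma s_colouring: "ritmo_colouring s (ritmo s)"
  using ritmo_colouring_ritmo[OF s_distinct] .

lemma s_colour_less: "j < length s \<Longrightarrow> ritmo s ! j < n"
  using s_avoids avoids_decr_iff_ritmo_less[OF s_distinct] n by simp

lemma pi_perm: "is_perm pi" and length_pi: "length pi = k" and length_c: "length c = k"
  and c_range: "q < k \<Longrightarrow> 1 \<le> c ! q \<and> c ! q < n"
  using inherited_colours[OF edge n] by simp_all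

lemma start_add: "start + (k - 1) = length s"
  using k k_le by (simp add: start_def)

lemma length_overlap: "length overlap = k - 1"
  using start_add by (simp add: overlap_def)

lemma nth_overlap: "q < k - 1 \<Longrightarrow> overlap ! q = s ! (start + q)"
  using start_add by (simp add: overlap_def)

lemma overlap_colour: "q < k - 1 \<Longrightarrow> ritmo s ! (start + q) = c ! q"
proof -
  assume q: "q < k - 1"
  have "take (k - 1) (drop start (ritmo s)) = take (k - 1) c"
    using connects by (simp add: window_def src_def be_def cpat_def start_def atLeast0LessThan)
  then have "take (k - 1) (drop start (ritmo s)) ! q = take (k - 1) c ! q" by simp
  then show ?thesis using q start_add s_distinct by simp
qed

lemma overlap_order:
  assumes "q < k - 1" "q' < k - 1"
  shows "overlap ! q < overlap ! q' \<longleftrightarrow> pi ! q < pi ! q'"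
proof -
  have std_eq: "std overlap = std (take (k - 1) pi)"
    using connects length_overlap
    by (simp add: window_def src_def be_def cpat_def pat_def start_def overlap_def atLeast0LessThan)
  have "overlap ! q < overlap ! q' \<longleftrightarrow> std overlap ! q < std overlap ! q'"
    using std_less_iff[of overlap] s_distinct length_overlap assms by (simp add: overlap_def)
  also have "\<dots> \<longleftrightarrow> take (k - 1) pi ! q < take (k - 1) pi ! q'"
    using std_eq std_less_iff[of "take (k - 1) pi"] is_perm_distinct[OF pi_perm] length_pi assms by simp
  finally show ?thesis using assms by simp
qed

lemma pi_neq_last: "q < k - 1 \<Longrightarrow> pi ! q \<noteq> pi ! (k - 1)"
  using is_perm_distinct[OF pi_perm] length_pi k by (simp add: nth_eq_iff_index_eq)

lemma overlap_range: "q < k - 1 \<Longrightarrow> 1 \<le> overlap ! q \<and> overlap ! q \<le> length s"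
  using is_perm_nth_bounds[OF s_perm, of "start + q"] start_add nth_overlap by simp

lemma le_gap_low: "q \<in> lower \<Longrightarrow> overlap ! q \<le> gap_low"
  by (simp add: gap_low_def lower_def)

lemma gap_low_cases: "gap_low = 0 \<or> (\<exists>q\<in>lower. gap_low = overlap ! q)"
proof -
  have "gap_low \<in> insert 0 ((!) overlap ` lower)"
    unfolding gap_low_def by (rule Max_in) (simp_all add: lower_def)
  then show ?thesis by auto
qed

lemma gap_high_le: "q \<in> upper \<Longrightarrow> gap_high \<le> overlap ! q"
  by (simp add: gap_high_def upper_def)

lemma gap_high_le_Suc: "gap_high \<le> Suc (length s)"
  by (simp add: gap_high_def upper_def)

lemma gap_high_cases: "gap_high = Suc (length s) \<or> (\<exists>q\<in>upper. gap_high = overlap ! q)"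
proof -
  have "gap_high \<in> insert (Suc (length s)) ((!) overlap ` upper)"
    unfolding gap_high_def by (rule Min_in) (simp_all add: upper_def)
  then show ?thesis by auto
qed

lemma gap_low_less_gap_high: "gap_low < gap_high"
proof -
  have "overlap ! q < overlap ! q'" if "q \<in> lower" "q' \<in> upper" for q q'
    using that overlap_order by (auto simp: lower_def upper_def)
  moreover have "overlap ! q < Suc (length s)" if "q \<in> lower" for q
    using that overlap_range by (fastforce simp: lower_def)
  moreover have "0 < overlap ! q'" if "q' \<in> upper" for q'
    using that overlap_range by (fastforce simp: upper_def)
  ultimately show ?thesis using gap_low_cases gap_high_cases by auto
qed

lemma high_colour_less:
  assumes j: "j < length s" "gap_high \<le> s ! j"
  shows "ritmo s ! j < c ! (k - 1)"
proof (cases "start \<le> j")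
  case True
  define q where "q = j - start"
  have q: "q < k - 1" "j = start + q" using True j(1) start_add unfolding q_def by auto
  have "q \<notin> lower"
    using le_gap_low[of q] gap_low_less_gap_high j(2) nth_overlap[OF q(1)] q(2) by auto
  then have "pi ! (k - 1) < pi ! q" using pi_neq_last[OF q(1)] q(1) by (auto simp: lower_def)
  then show ?thesis
    using inherited_larger_colour_less[OF edge q(1)] overlap_colour[OF q(1)] q(2) by simp
next
  case False
  from gap_high_cases show ?thesis
  proof
    assume "gap_high = Suc (length s)"
    then show ?thesis using j is_perm_nth_bounds[OF s_perm j(1)] by simp
  next
    assume "\<exists>q\<in>upper. gap_high = overlap ! q"
    then obtain q where q: "q \<in> upper" "gap_high = overlap ! q" by blast
    then have q1: "q < k - 1" by (simp add: upper_def)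
    have in_s: "start + q < length s" "j < start + q" using q1 start_add False by auto
    then have "s ! (start + q) \<noteq> s ! j" using s_distinct j(1) by (simp add: nth_eq_iff_index_eq)
    then have "s ! (start + q) < s ! j" using j(2) q(2) nth_overlap[OF q1] by simp
    then have "ritmo s ! j < ritmo s ! (start + q)"
      using ritmo_colouring_less[OF s_colouring in_s(2,1)] by simp
    moreover have "c ! q < c ! (k - 1)"
      using inherited_larger_colour_less[OF edge q1] q(1) by (simp add: upper_def)
    ultimately show ?thesis using overlap_colour[OF q1] by simp
  qed
qed

lemma gap_low_eq_predecessor:
  assumes q: "q < k - 1" "pi ! q + 1 = pi ! (k - 1)"
  shows "gap_low = overlap ! q"
proof (rule antisym)
  have q_lower: "q \<in> lower" using q by (simp add: lower_def)
  then show "overlap ! q \<le> gap_low" by (rule le_gap_low)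
  have "overlap ! q' \<le> overlap ! q" if "q' \<in> lower" for q'
  proof (cases "q' = q")
    case False
    moreover have "q' < length pi" "q < length pi" using that q(1) length_pi by (auto simp: lower_def)
    ultimately have "pi ! q' \<noteq> pi ! q"
      using is_perm_distinct[OF pi_perm] by (simp add: nth_eq_iff_index_eq)
    then show ?thesis using that q overlap_order[of q' q] by (simp add: lower_def)
  qed simp
  then show "gap_low \<le> overlap ! q" using gap_low_cases by auto
qed

lemma colour_below_reached:
  "c ! (k - 1) = 1 \<or> (\<exists>j<length s. gap_low < s ! j \<and> ritmo s ! j = c ! (k - 1) - 1)"
proof (cases "c ! (k - 1) = 1")
  case False
  then have c2: "2 \<le> c ! (k - 1)" using c_range[of "k - 1"] k by simp
  from inherited_last_colour_source[OF edge k c2]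
  have "\<exists>j<length s. gap_low < s ! j \<and> ritmo s ! j = c ! (k - 1) - 1"
  proof (elim disjE exE conjE)
    fix q assume q: "q < k - 1" "pi ! (k - 1) < pi ! q" "c ! q = c ! (k - 1) - 1"
    then have "gap_low < overlap ! q"
      using gap_low_less_gap_high gap_high_le[of q] by (simp add: upper_def)
    then show ?thesis
      using q nth_overlap[OF q(1)] overlap_colour[OF q(1)] start_add by (intro exI[of _ "start + q"]) auto
  next
    fix q assume q: "q < k - 1" "pi ! q + 1 = pi ! (k - 1)" "c ! (k - 1) \<le> c ! q"
    have in_s: "start + q < length s" using q(1) start_add by simp
    have "1 \<le> c ! (k - 1) - 1" "c ! (k - 1) - 1 < ritmo s ! (start + q)"
      using False c_range[of "k - 1"] k q(3) overlap_colour[OF q(1)] by auto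
    then obtain j where j: "j < start + q" "s ! (start + q) < s ! j" "ritmo s ! j = c ! (k - 1) - 1"
      using ritmo_colouring_witness[OF s_colouring in_s] by blast
    then show ?thesis
      using in_s gap_low_eq_predecessor[OF q(1,2)] nth_overlap[OF q(1)] by (intro exI[of _ j]) simp
  next
    assume last_one: "pi ! (k - 1) = 1"
    have "0 < pi ! q" if "q < k - 1" for q
    proof -
      have "q < length pi" using that length_pi by simp
      then show ?thesis using is_perm_nth_bounds[OF pi_perm] by fastforce
    qed
    then have "lower = {}" using last_one by (auto simp: lower_def)
    then have "gap_low = 0" by (simp add: gap_low_def)
    have "c ! (k - 1) - 1 \<in> {1..n - 2}" using c2 c_range[of "k - 1"] k by auto
    then obtain j where "j < length s" "ritmo s ! j = c ! (k - 1) - 1"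
      using cover s_distinct by (metis in_set_conv_nth length_ritmo subsetD)
    moreover have "1 \<le> s ! j" using is_perm_nth_bounds[OF s_perm \<open>j < length s\<close>] by simp
    ultimately show ?thesis using \<open>gap_low = 0\<close> by (intro exI[of _ j]) simp
  qed
  then show ?thesis by simp
qed simp

lemma snoc_value_perm:
  assumes "gap_low < v" "v \<le> gap_high"
  shows "is_perm (snoc_value v s)"
  using is_perm_snoc_value[OF s_perm] assms gap_high_le_Suc by simp

lemma shift_overlap_vs_gap:
  assumes v: "gap_low < v" "v \<le> gap_high" and q: "q < k - 1"
  shows "shift_from v (overlap ! q) < v \<longleftrightarrow> pi ! q < pi ! (k - 1)"
    and "v < shift_from v (overlap ! q) \<longleftrightarrow> pi ! (k - 1) < pi ! q"
proof -
  have "overlap ! q \<le> gap_low" if "pi ! q < pi ! (k - 1)"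
    using le_gap_low that q by (simp add: lower_def)
  moreover have "gap_high \<le> overlap ! q" if "pi ! (k - 1) < pi ! q"
    using gap_high_le that q by (simp add: upper_def)
  ultimately show "shift_from v (overlap ! q) < v \<longleftrightarrow> pi ! q < pi ! (k - 1)"
    and "v < shift_from v (overlap ! q) \<longleftrightarrow> pi ! (k - 1) < pi ! q"
    using v pi_neq_last[OF q] by (auto simp: shift_from_def neq_iff)
qed

lemma window_snoc_value_last:
  assumes v: "gap_low < v" "v \<le> gap_high"
    and ritmo_eq: "ritmo (snoc_value v s) = ritmo s @ [c ! (k - 1)]"
  shows "window k start (snoc_value v s) = (pi, c)"
proof -
  define X where "X = map (shift_from v) overlap @ [v]"
  have X: "take k (drop start (snoc_value v s)) = X"
    using start_add length_overlap k by (simp add: snoc_value_def X_def overlap_def drop_map)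
  have X_nth: "X ! q = shift_from v (overlap ! q)" if "q < k - 1" for q
    using that length_overlap by (simp add: X_def nth_append)
  have X_last: "X ! (k - 1) = v" using length_overlap by (simp add: X_def nth_append)
  have "std X = std pi"
  proof (rule std_eq_if_order_iso)
    show "distinct X"
      using is_perm_distinct[OF snoc_value_perm[OF v]] X[symmetric] by (metis distinct_drop distinct_take)
    show "distinct pi" "length X = length pi" using pi_perm length_overlap length_pi k
      by (simp_all add: X_def is_perm_distinct)
    fix p q assume "p < length X" "q < length X"
    then have "p < k - 1 \<or> p = k - 1" "q < k - 1 \<or> q = k - 1" using length_overlap k by (auto simp: X_def)
    then show "X ! p < X ! q \<longleftrightarrow> pi ! p < pi ! q"
    proof (elim disjE)
      assume "p < k - 1" "q < k - 1"
      then show ?thesis using X_nth overlap_order strict_mono_less[OF strict_mono_shift_from] by simp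
    next
      assume "p < k - 1" "q = k - 1"
      then show ?thesis
        unfolding \<open>q = k - 1\<close> X_last X_nth[OF \<open>p < k - 1\<close>] using shift_overlap_vs_gap(1)[OF v] by simp
    next
      assume "p = k - 1" "q < k - 1"
      then show ?thesis
        unfolding \<open>p = k - 1\<close> X_last X_nth[OF \<open>q < k - 1\<close>] using shift_overlap_vs_gap(2)[OF v] by simp
    qed simp
  qed
  then have "fst (window k start (snoc_value v s)) = pi"
    using X std_is_perm[OF pi_perm] by (simp add: window_def)
  moreover have "take k (drop start (ritmo s @ [c ! (k - 1)])) = c"
  proof -
    have "drop start (ritmo s) = take (k - 1) c"
      using overlap_colour start_add length_c s_distinct k by (intro nth_equalityI) auto
    then show ?thesis
      using start_add length_c k s_distinct by (simp add: take_Suc_conv_app_nth[symmetric])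
  qed
  ultimately show ?thesis using ritmo_eq by (simp add: window_def)
qed

theorem extension:
  "\<exists>s'. s' \<in> Av (decr n) \<and> length s' = Suc (length s) \<and> {1..n - 2} \<subseteq> set (ritmo s') \<and>
     coloured_walk k s' = coloured_walk k s @ [(pi, c)]"
proof -
  have cn: "1 \<le> c ! (k - 1)" "c ! (k - 1) < n" using c_range[of "k - 1"] k by simp_all
  obtain v where v: "gap_low < v" "v \<le> gap_high"
    and colours: "(!) (ritmo s) ` {j. j < length s \<and> v \<le> s ! j} = {1..<c ! (k - 1)}"
    using colour_threshold_exists[OF s_colouring s_distinct gap_low_less_gap_high high_colour_less
        colour_below_reached cn(1)] by blast
  define s' where "s' = snoc_value v s"
  have ritmo_s': "ritmo s' = ritmo s @ [c ! (k - 1)]"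
    unfolding s'_def using ritmo_snoc_value[OF s_distinct cn(1) colours] .
  have perm: "is_perm s'" unfolding s'_def using snoc_value_perm[OF v] .
  have "length s' = Suc (length s)" by (simp add: s'_def)
  then have "\<forall>i<length s'. ritmo s' ! i < n"
    using s_colour_less cn(2) s_distinct by (auto simp: ritmo_s' nth_append less_Suc_eq)
  then have "avoids s' (decr n)"
    using avoids_decr_iff_ritmo_less[OF is_perm_distinct[OF perm]] n by simp
  then have "s' \<in> Av (decr n)" using perm by (simp add: Av_iff s'_def)
  moreover have "{1..n - 2} \<subseteq> set (ritmo s')" using cover by (auto simp: ritmo_s')
  moreover have "coloured_walk k s' = coloured_walk k s @ [(pi, c)]"
    using coloured_walk_snoc_value[OF s_distinct k_le] window_snoc_value_last[OF v] ritmo_s'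
    unfolding s'_def start_def by simp
  ultimately show ?thesis by (auto simp: s'_def)
qed

end

lemma is_walk_Cons_Cons:
  "is_walk k n (e # e' # w) \<longleftrightarrow> e \<in> ov_edges k n \<and> tgt k e = src k e' \<and> is_walk k n (e' # w)"
  unfolding is_walk_def
proof (intro iffI conjI allI impI; (elim conjE)?)
  fix i assume walk: "\<forall>i. Suc i < length (e # e' # w) \<longrightarrow> tgt k ((e # e' # w) ! i) = src k ((e # e' # w) ! Suc i)"
    and "Suc i < length (e' # w)"
  then show "tgt k ((e' # w) ! i) = src k ((e' # w) ! Suc i)" using walk[rule_format, of "Suc i"] by simp
next
  fix i assume "tgt k e = src k e'"
    and walk: "\<forall>i. Suc i < length (e' # w) \<longrightarrow> tgt k ((e' # w) ! i) = src k ((e' # w) ! Suc i)"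
    and "Suc i < length (e # e' # w)"
  then show "tgt k ((e # e' # w) ! i) = src k ((e # e' # w) ! Suc i)"
    by (cases i) auto
qed auto

lemma is_walk_append_left:
  assumes "is_walk k n (w' @ w)"
  shows "is_walk k n w'"
  unfolding is_walk_def
proof (intro conjI allI impI)
  show "set w' \<subseteq> ov_edges k n" using assms by (simp add: is_walk_def)
  fix i assume "Suc i < length w'"
  then show "tgt k (w' ! i) = src k (w' ! Suc i)"
    using assms[unfolded is_walk_def] by (auto simp: nth_append dest!: spec[of _ i])
qed

lemma concat_defined_if_is_walk:
  assumes "is_walk k n (w' @ w)" "w \<noteq> []"
  shows "concat_defined k w' w"
proof (cases "w' = []")
  case False
  then have "Suc (length w' - 1) < length (w' @ w)" using assms(2) by simp
  then have "tgt k ((w' @ w) ! (length w' - 1)) = src k ((w' @ w) ! Suc (length w' - 1))"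
    using assms(1) unfolding is_walk_def by blast
  then show ?thesis
    using False assms(2) by (simp add: concat_defined_def nth_append last_conv_nth hd_conv_nth)
qed (simp add: concat_defined_def)

lemma coloured_walk_extend_walk:
  assumes n: "2 \<le> n" and k: "1 \<le> k"
  shows "s \<in> Av (decr n) \<Longrightarrow> k \<le> length s \<Longrightarrow> {1..n - 2} \<subseteq> set (ritmo s) \<Longrightarrow>
    is_walk k n (window k (length s - k) s # w) \<Longrightarrow>
    \<exists>s'. s' \<in> Av (decr n) \<and> length s' = length s + length w \<and> coloured_walk k s' = coloured_walk k s @ w"
proof (induction w arbitrary: s)
  case (Cons e w)
  obtain pi c where e: "e = (pi, c)" by (cases e)
  have ds: "distinct s" using Cons.prems(1) by (simp add: Av_iff is_perm_distinct)
  have walk: "tgt k (window k (length s - k) s) = src k e" "is_walk k n (e # w)"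
    using Cons.prems(4) unfolding is_walk_Cons_Cons by simp_all
  then have "e \<in> inherited n k" by (simp add: is_walk_def ov_edges_def)
  then have "walk_extension n k s pi c"
    using Cons.prems walk(1) n k tgt_window[OF ds k, of "length s - k"] by unfold_locales (simp_all add: e)
  then obtain s1 where s1: "s1 \<in> Av (decr n)" "length s1 = Suc (length s)" "{1..n - 2} \<subseteq> set (ritmo s1)"
    "coloured_walk k s1 = coloured_walk k s @ [e]"
    using walk_extension.extension e by blast
  have "window k (length s1 - k) s1 = e"
    using last_coloured_walk[of k s1] s1(4) by simp
  then obtain s' where "s' \<in> Av (decr n)" "length s' = length s1 + length w" "coloured_walk k s' = coloured_walk k s1 @ w"
    using Cons.IH[OF s1(1) _ s1(3)] s1(2) Cons.prems(2) walk(2) by auto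
  then show ?case using s1 by (intro exI[of _ s']) simp
qed auto

text \<open>Prepending the decreasing sequence n - 2, ..., 1 below all entries of r makes every colour
below n - 1 appear without changing the colours of the entries of r.\<close>

lemma exists_covering_prefix:
  assumes r: "r \<in> Av (decr n)" and n: "2 \<le> n"
  shows "\<exists>s. s \<in> Av (decr n) \<and> length s = n - 2 + length r \<and> {1..n - 2} \<subseteq> set (ritmo s) \<and>
    drop (n - 2) s = map (\<lambda>y. y + (n - 2)) r \<and> drop (n - 2) (ritmo s) = ritmo r"
proof -
  have r_perm: "is_perm r" and dr: "distinct r" and avr: "avoids r (decr n)"
    using r by (simp_all add: Av_iff is_perm_distinct)
  define m where "m = n - 2"
  define P where "P = rev [1..<Suc m]"
  define Q where "Q = map (\<lambda>y. y + m) r"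
  define s where "s = P @ Q"
  have strict: "strict_mono (\<lambda>y::nat. y + m)" by (simp add: strict_mono_def)
  have Q_colouring: "ritmo_colouring Q (ritmo r)"
    unfolding Q_def using ritmo_colouring_map_strict_mono[OF strict] ritmo_colouring_ritmo[OF dr] by blast
  have PQ: "a < b" if "a \<in> set P" "b \<in> set Q" for a b
    using that is_perm_nth_bounds[OF r_perm] by (force simp: P_def Q_def in_set_conv_nth)
  have ds: "distinct s"
    using PQ dr strict by (force simp: s_def P_def Q_def distinct_map strict_mono_imp_inj_on)
  have ritmo_s: "ritmo s = [1..<Suc m] @ ritmo r"
    unfolding s_def using ritmo_eqI[OF ds[unfolded s_def]]
      ritmo_colouring_append[OF ritmo_colouring_decreasing Q_colouring PQ] by (simp add: P_def)
  have ls: "length s = m + length r" by (simp add: s_def P_def Q_def)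
  have "set s \<subseteq> {1..length s}"
    using r_perm ls by (auto simp: s_def P_def Q_def is_perm_def)
  then have perm: "is_perm s" using is_perm_if_distinct_subset[OF ds] by simp
  have "\<forall>i<length s. ritmo s ! i < n"
    using avr avoids_decr_iff_ritmo_less[OF dr] n ls unfolding ritmo_s m_def
    by (auto simp: nth_append simp del: upt_Suc)
  then have "avoids s (decr n)" using avoids_decr_iff_ritmo_less[OF ds] n by simp
  moreover have "1 \<le> length s" using r ls by (simp add: Av_iff)
  ultimately have "s \<in> Av (decr n)" using perm by (simp add: Av_iff)
  moreover have "{1..n - 2} \<subseteq> set (ritmo s)" by (auto simp: ritmo_s m_def)
  moreover have "drop (n - 2) s = Q" by (simp add: s_def P_def m_def)
  moreover have "drop (n - 2) (ritmo s) = ritmo r" by (simp add: ritmo_s m_def)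
  ultimately show ?thesis using ls unfolding Q_def m_def by blast
qed

lemma window_last_shift:
  assumes "distinct r" "k \<le> length r" "drop m s = map (\<lambda>y. y + m') r" "drop m (ritmo s) = ritmo r"
    "length s = m + length r"
  shows "window k (length s - k) s = en k (S r)"
proof -
  have "length s - k = m + (length r - k)" using assms(2,5) by simp
  then have "take k (drop (length s - k) s) = map (\<lambda>y. y + m') (take k (drop (length r - k) r))"
    "take k (drop (length s - k) (ritmo s)) = take k (drop (length r - k) (ritmo r))"
    using assms(3,4) by (simp_all add: take_map drop_map add.commute[of m] flip: drop_drop)
  moreover have "strict_mono (\<lambda>y::nat. y + m')" by (simp add: strict_mono_def)
  ultimately show ?thesis
    using std_map_strict_mono en_S_eq_window[OF assms(2)] assms(1) by (simp add: window_def)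
qed

lemma inherited_witness_bound:
  assumes n: "2 \<le> n"
  shows "\<exists>B. \<forall>e\<in>inherited n k. \<exists>r. r \<in> Av (decr n) \<and> k \<le> length r \<and> length r \<le> B \<and> en k (S r) = e"
proof -
  have "\<forall>e\<in>inherited n k. \<exists>r. r \<in> Av (decr n) \<and> k \<le> length r \<and> en k (S r) = e"
    unfolding inherited_def by blast
  then obtain f where f: "\<And>e. e \<in> inherited n k \<Longrightarrow> f e \<in> Av (decr n) \<and> k \<le> length (f e) \<and> en k (S (f e)) = e"
    by metis
  have "length (f e) \<le> Max ((length \<circ> f) ` inherited n k)" if "e \<in> inherited n k" for e
    using that finite_inherited[OF n] by (auto intro: Max_ge)
  then show ?thesis using f by blast
qed

lemma walk_realisation:
  assumes n: "2 \<le> n" and k: "1 \<le> k"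
  obtains B where "\<And>w. is_walk k n w \<Longrightarrow> w \<noteq> [] \<Longrightarrow>
    \<exists>w' \<sigma>. \<sigma> \<in> Av (decr n) \<and> length w' \<le> B \<and> length \<sigma> = length w + k - 1 + length w' \<and>
      coloured_walk k \<sigma> = w' @ w"
proof -
  obtain B where B: "\<And>e. e \<in> inherited n k \<Longrightarrow>
      \<exists>r. r \<in> Av (decr n) \<and> k \<le> length r \<and> length r \<le> B \<and> en k (S r) = e"
    using inherited_witness_bound[OF n] by blast
  have "\<exists>w' \<sigma>. \<sigma> \<in> Av (decr n) \<and> length w' \<le> n - 2 + B \<and> length \<sigma> = length w + k - 1 + length w' \<and>
      coloured_walk k \<sigma> = w' @ w" if w: "is_walk k n w" "w \<noteq> []" for w
  proof -
    have "hd w \<in> inherited n k" using w by (auto simp: is_walk_def ov_edges_def)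
    then obtain r where r: "r \<in> Av (decr n)" "k \<le> length r" "length r \<le> B" "en k (S r) = hd w"
      using B by blast
    obtain s where s: "s \<in> Av (decr n)" "length s = n - 2 + length r" "{1..n - 2} \<subseteq> set (ritmo s)"
      "window k (length s - k) s = hd w"
      using exists_covering_prefix[OF r(1) n] window_last_shift r by (metis Av_iff is_perm_distinct)
    have "is_walk k n (window k (length s - k) s # tl w)" using s(4) w by simp
    then obtain \<sigma> where \<sigma>: "\<sigma> \<in> Av (decr n)" "length \<sigma> = length s + length (tl w)"
      "coloured_walk k \<sigma> = coloured_walk k s @ tl w"
      using coloured_walk_extend_walk[OF n k s(1) _ s(3)] r(2) s(2) by fastforce
    obtain w' where w': "coloured_walk k s = w' @ [hd w]"
      using last_coloured_walk[of k s] s(4) length_coloured_walk[of k s]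
      by (metis append_butlast_last_id list.size(3) zero_neq_one add_is_0)
    then have "coloured_walk k \<sigma> = w' @ w" using \<sigma>(3) w(2) by simp
    moreover have "length w' = length s - k"
      using arg_cong[OF w', of length] by (simp add: length_coloured_walk)
    moreover have "1 \<le> length w" using w(2) by (cases w) auto
    ultimately show ?thesis
      using \<sigma>(1,2) s(2) r(2,3) by (intro exI[of _ w'] exI[of _ \<sigma>]) auto
  qed
  then show ?thesis using that by blast
qed

theorem mainTheorem11:
  fixes n k :: nat
  assumes "n \<ge> 2" and "k \<ge> 1"
  shows "\<exists>C::nat. \<forall>w. is_walk k n w \<and> w \<noteq> [] \<longrightarrow>
           (\<exists>w' \<sigma>. is_walk k n w' \<and> length w' \<le> C \<and> concat_defined k w' w \<and>
              \<sigma> \<in> Av (decr n) \<and> length \<sigma> = length w + k - 1 + length w' \<and>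
              coloured_walk k \<sigma> = w' @ w)"
proof -
  obtain C where C: "\<And>w. is_walk k n w \<Longrightarrow> w \<noteq> [] \<Longrightarrow>
      \<exists>w' \<sigma>. \<sigma> \<in> Av (decr n) \<and> length w' \<le> C \<and> length \<sigma> = length w + k - 1 + length w' \<and>
        coloured_walk k \<sigma> = w' @ w"
    using walk_realisation[OF assms] by blast
  have "is_walk k n w' \<and> concat_defined k w' w"
    if "\<sigma> \<in> Av (decr n)" "length \<sigma> = length w + k - 1 + length w'" "coloured_walk k \<sigma> = w' @ w" "w \<noteq> []"
    for \<sigma> w w'
  proof -
    have "k \<le> length \<sigma>" using that(2,4) by (cases w) auto
    then have "is_walk k n (w' @ w)"
      using is_walk_coloured_walk[OF that(1) assms(2) _ assms(1)] that(3) by simp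
    then show ?thesis using is_walk_append_left concat_defined_if_is_walk that(4) by blast
  qed
  then show ?thesis using C by metis
qed

end
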